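(* Fix $\alpha>1$, a target model $\theta_0^*\in\Theta$ and a class $\hat\Theta_0^{\mathrm{u}}\subseteq\Theta$; let $\epsilon_0=\min_{\theta_0\in\hat\Theta_0^{\mathrm{u}}}\max_{\pi\in\Pi}\mathtt{D}_{\mathtt{R},\alpha}(\mathbb{P}^\pi_{\theta_0^*},\mathbb{P}^\pi_{\theta_0})$, $\eta\le\frac{1}{KH}$, and run OMLE on $\hat\Theta_0^{\mathrm{u}}$ for $K$ iterations with margin \[\beta_0=\log\mathcal{N}_\eta(\hat\Theta_0^{\mathrm{u}})+\log\frac{4eK}{\delta}+\epsilon_0KH+\frac{\mathbf{1}_{\{\epsilon_0\ne0\}}}{\alpha-1}\log\frac{4K}{\delta}.\] Then with probability at least $1-\delta$, for every $k\in[K]$ and every $\theta_0\in\boldsymbol{\mathcal{B}}_k$, \[\sum_{t<k}\sum_{h}\mathtt{D}_{\mathtt{H}}^2\big(\mathbb{P}^{\nu_h^{\pi^t}}_{\theta_0},\mathbb{P}^{\nu_h^{\pi^t}}_{\theta_0^*}\big)\le2\beta_0.\]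
   Context: Setting: finite $\mathcal{O},\mathcal{A}$, horizon $H$; trajectories $\tau_H=(o_1,a_1,\ldots,o_H,a_H)$; policies $\pi$ with $a_h\sim\pi_h(\cdot\mid\tau_{h-1},o_h)$, $\Pi$ the set of all policies, $\pi(\tau_H)=\prod_{t}\pi(a_t\mid o_t,\tau_{t-1})$; $\mathbb{P}^\pi_\theta$ is the trajectory law of model $\theta$ under $\pi$. $\Theta$ is the set of rank-$r$, $\gamma$-well-conditioned predictive state representations (PSRs); the target task has core action sequence sets $\mathcal{Q}_h^A\subset\mathcal{A}^{H-h}$. $\mathtt{D}_{\mathtt{TV}}(\mathbb{P},\mathbb{Q})=\sum_x|\mathbb{P}(x)-\mathbb{Q}(x)|$, $\mathtt{D}_{\mathtt{H}}^2(\mathbb{P},\mathbb{Q})=1-\sum_x\sqrt{\mathbb{P}(x)\mathbb{Q}(x)}$, $\mathtt{D}_{\mathtt{R},\alpha}(\mathbb{P},\mathbb{Q})=\frac{1}{\alpha-1}\log\mathbb{E}_{\mathbb{P}}[(\mathrm{d}\mathbb{P}/\mathrm{d}\mathbb{Q})^{\alpha-1}]$. Bracketing number: a bracket $[l,g]$ is the set of class members $f$ with $l\le f\le g$; it is an $\eta$-bracket if $\max_{\pi\in\Pi}\sum_{\tau_H}|l-g|(\tau_H)\pi(\tau_H)<\eta$; $\mathcal{N}_\eta(\hat\Theta)$ is the minimal number of $\eta$-brackets covering $\{\mathbb{P}_\theta:\theta\in\hat\Theta\}$. Algorithm OMLE (inputs $\hat\Theta$, $\beta_0$, $K$): $\boldsymbol{\mathcal{B}}_1=\hat\Theta$;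 for $k=1,\ldots,K$: $\pi^k\in\arg\max_{\pi}\max_{\theta,\theta'\in\boldsymbol{\mathcal{B}}_k}\mathtt{D}_{\mathtt{TV}}(\mathbb{P}^\pi_\theta,\mathbb{P}^\pi_{\theta'})$; for each $h\in[H]$ draw $\tau_H^{k,h}\sim\mathbb{P}^{\nu_h^{\pi^k}}_{\theta_0^*}$, where $\nu_h^{\pi^k}$ follows $\pi^k$ for $h-1$ steps, takes a uniform action at step $h$, then plays a uniformly random core action sequence from $\mathcal{Q}_h^A$; then $\boldsymbol{\mathcal{B}}_{k+1}=\{\theta\in\hat\Theta:\sum_{t<k}\sum_h\log\mathbb{P}^{\nu_h^{\pi^t}}_\theta(\tau_H^{t,h})\ge\max_{\theta'\in\hat\Theta}\sum_{t<k}\sum_h\log\mathbb{P}^{\nu_h^{\pi^t}}_{\theta'}(\tau_H^{t,h})-\beta_0\}\cap\boldsymbol{\mathcal{B}}_k$. *)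

theory Defs
  imports "HOL-Probability.Probability"
begin

(* histories / trajectories tau_h = (o_1,a_1,...,o_h,a_h) as lists of pairs *)
type_synonym ('o,'a) hist = "('o \<times> 'a) list"
(* a model: law of the next observation given the history (P_theta(o_h | tau_{h-1})) *)
type_synonym ('o,'a) model = "('o,'a) hist \<Rightarrow> 'o pmf"
(* a (general, randomized, history dependent) policy: pi_h(. | tau_{h-1}, o_h) *)
type_synonym ('o,'a) policy = "('o,'a) hist \<Rightarrow> 'o \<Rightarrow> 'a pmf"
(* data of one OMLE iteration: h \<mapsto> tau_H^{k,h} *)
type_synonym ('o,'a) data = "nat \<Rightarrow> ('o,'a) hist"

fun traj :: "('o,'a) model \<Rightarrow> ('o,'a) policy \<Rightarrow> nat \<Rightarrow> ('o,'a) hist pmf" where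
  "traj \<theta> \<pi> 0 = return_pmf []"
| "traj \<theta> \<pi> (Suc n) =
     traj \<theta> \<pi> n \<bind> (\<lambda>\<tau>. \<theta> \<tau> \<bind> (\<lambda>ob. \<pi> \<tau> ob \<bind> (\<lambda>a. return_pmf (\<tau> @ [(ob, a)]))))"

definition model_prob :: "('o,'a) model \<Rightarrow> ('o,'a) hist \<Rightarrow> real" where
  "model_prob \<theta> \<tau> = (\<Prod>t<length \<tau>. pmf (\<theta> (take t \<tau>)) (fst (\<tau> ! t)))"

definition pol_prob :: "('o,'a) policy \<Rightarrow> ('o,'a) hist \<Rightarrow> real" where
  "pol_prob \<pi> \<tau> = (\<Prod>t<length \<tau>. pmf (\<pi> (take t \<tau>) (fst (\<tau> ! t))) (snd (\<tau> ! t)))"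

definition D_TV :: "'b pmf \<Rightarrow> 'b pmf \<Rightarrow> real" where
  "D_TV P Q = (\<Sum>\<^sub>\<infinity>x. \<bar>pmf P x - pmf Q x\<bar>)"

definition D_H2 :: "'b pmf \<Rightarrow> 'b pmf \<Rightarrow> real" where
  "D_H2 P Q = 1 - (\<Sum>\<^sub>\<infinity>x. sqrt (pmf P x * pmf Q x))"

definition D_R :: "real \<Rightarrow> 'b pmf \<Rightarrow> 'b pmf \<Rightarrow> ereal" where
  "D_R \<alpha> P Q =
     (if \<exists>x\<in>set_pmf P. pmf Q x = 0 then \<infinity>
      else ereal (ln (\<Sum>x\<in>set_pmf P. pmf P x powr \<alpha> * pmf Q x powr (1 - \<alpha>)) / (\<alpha> - 1)))"

definition is_bracket :: "nat \<Rightarrow> real \<Rightarrow> (('o::finite,'a::finite) hist \<Rightarrow> real) \<Rightarrow> (('o,'a) hist \<Rightarrow> real) \<Rightarrow> bool" where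
  "is_bracket H \<eta> l g \<longleftrightarrow>
     (SUP \<pi>::('o,'a) policy. \<Sum>\<tau>\<in>{\<tau>. length \<tau> = H}. \<bar>l \<tau> - g \<tau>\<bar> * pol_prob \<pi> \<tau>) < \<eta>"

definition bracket_num :: "nat \<Rightarrow> real \<Rightarrow> ('o::finite,'a::finite) model set \<Rightarrow> enat" where
  "bracket_num H \<eta> \<Theta>h = (INF n \<in> {n. \<exists>l g. (\<forall>i<n. is_bracket H \<eta> (l i) (g i)) \<and>
        (\<forall>\<theta>\<in>\<Theta>h. \<exists>i<n. \<forall>\<tau>. length \<tau> = H \<longrightarrow>
            l i \<tau> \<le> model_prob \<theta> \<tau> \<and> model_prob \<theta> \<tau> \<le> g i \<tau>)}. enat n)"

definition ln_enat :: "enat \<Rightarrow> ereal" where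
  "ln_enat n = (case n of enat m \<Rightarrow> ereal (ln (real m)) | \<infinity> \<Rightarrow> \<infinity>)"

definition eln :: "real \<Rightarrow> ereal" where
  "eln x = (if x > 0 then ereal (ln x) else -\<infinity>)"

(* exploration policy nu_h^pi: follow pi for steps 1..h-1, uniform action at step h, then
   a uniformly random core action sequence from Q h (played action by action, i.e. the
   conditional law of the next entry of a uniform element of Q h given the entries played so far) *)
definition nu :: "(nat \<Rightarrow> 'a::finite list set) \<Rightarrow> nat \<Rightarrow> ('o,'a) policy \<Rightarrow> ('o,'a) policy" where
  "nu Q h \<pi> = (\<lambda>\<tau> ob.
     if Suc (length \<tau>) < h then \<pi> \<tau> ob
     else if Suc (length \<tau>) = h then pmf_of_set UNIV
     else (let j = length \<tau> - h; S = {q \<in> Q h. take j q = map snd (drop h \<tau>)} in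
           if S = {} then pmf_of_set UNIV else map_pmf (\<lambda>q. q ! j) (pmf_of_set S)))"

(* OMLE log-likelihood of data D (iterations t = 0..length D - 1, policy pi^t = sel (take t D)) *)
definition loglik :: "nat \<Rightarrow> (nat \<Rightarrow> 'a::finite list set) \<Rightarrow> (('o,'a) data list \<Rightarrow> ('o,'a) policy)
     \<Rightarrow> ('o,'a) data list \<Rightarrow> ('o,'a) model \<Rightarrow> ereal" where
  "loglik H Q sel D \<theta> =
     (\<Sum>t<length D. \<Sum>h\<in>{1..H}. eln (pmf (traj \<theta> (nu Q h (sel (take t D))) H) ((D ! t) h)))"

(* Bset ... D j = confidence set after using the first j iterations' data *)
fun Bset :: "('o,'a) model set \<Rightarrow> ereal \<Rightarrow> nat \<Rightarrow> (nat \<Rightarrow> 'a::finite list set)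
     \<Rightarrow> (('o,'a) data list \<Rightarrow> ('o,'a) policy) \<Rightarrow> ('o,'a) data list \<Rightarrow> nat \<Rightarrow> ('o,'a) model set" where
  "Bset \<Theta>h \<beta> H Q sel D 0 = \<Theta>h"
| "Bset \<Theta>h \<beta> H Q sel D (Suc j) =
     {\<theta> \<in> \<Theta>h. loglik H Q sel (take (Suc j) D) \<theta> \<ge>
        (SUP \<theta>'\<in>\<Theta>h. loglik H Q sel (take (Suc j) D) \<theta>') - \<beta>} \<inter> Bset \<Theta>h \<beta> H Q sel D j"

(* B_{k+1} when D holds the data of iterations 1..k *)
definition OMLE_B :: "('o,'a) model set \<Rightarrow> ereal \<Rightarrow> nat \<Rightarrow> (nat \<Rightarrow> 'a::finite list set)
     \<Rightarrow> (('o,'a) data list \<Rightarrow> ('o,'a) policy) \<Rightarrow> ('o,'a) data list \<Rightarrow> ('o,'a) model set" where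
  "OMLE_B \<Theta>h \<beta> H Q sel D = Bset \<Theta>h \<beta> H Q sel D (length D)"

definition TV_diam :: "nat \<Rightarrow> ('o,'a) model set \<Rightarrow> ('o,'a) policy \<Rightarrow> ereal" where
  "TV_diam H B \<pi> = (SUP \<theta>\<in>B. SUP \<theta>'\<in>B. ereal (D_TV (traj \<theta> \<pi> H) (traj \<theta>' \<pi> H)))"

fun data_pmf :: "('o,'a) model \<Rightarrow> (nat \<Rightarrow> 'a::finite list set) \<Rightarrow> nat
     \<Rightarrow> (('o,'a) data list \<Rightarrow> ('o,'a) policy) \<Rightarrow> nat \<Rightarrow> ('o,'a) data list pmf" where
  "data_pmf \<theta>s Q H sel 0 = return_pmf []"
| "data_pmf \<theta>s Q H sel (Suc k) =
     data_pmf \<theta>s Q H sel k \<bind> (\<lambda>D. map_pmf (\<lambda>X. D @ [X])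
        (Pi_pmf {1..H} [] (\<lambda>h. traj \<theta>s (nu Q h (sel D)) H)))"

definition eps0 :: "real \<Rightarrow> nat \<Rightarrow> ('o,'a) model \<Rightarrow> ('o,'a) model set \<Rightarrow> ereal" where
  "eps0 \<alpha> H \<theta>s \<Theta>h = (INF \<theta>0\<in>\<Theta>h. SUP \<pi>::('o,'a) policy. D_R \<alpha> (traj \<theta>s \<pi> H) (traj \<theta>0 \<pi> H))"

definition beta0 :: "real \<Rightarrow> real \<Rightarrow> real \<Rightarrow> nat \<Rightarrow> nat \<Rightarrow> ('o::finite,'a::finite) model
     \<Rightarrow> ('o,'a) model set \<Rightarrow> ereal" where
  "beta0 \<alpha> \<delta> \<eta> K H \<theta>s \<Theta>h =
     ln_enat (bracket_num H \<eta> \<Theta>h) + ereal (ln (4 * exp 1 * real K / \<delta>))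
     + eps0 \<alpha> H \<theta>s \<Theta>h * ereal (real K * real H)
     + (if eps0 \<alpha> H \<theta>s \<Theta>h \<noteq> 0 then ereal (ln (4 * real K / \<delta>) / (\<alpha> - 1)) else 0)"

end

theory Submission
  imports Defs
begin

text \<open>
  Bracketing reduces the statement to the finitely many brackets \<open>[l i, g i]\<close> of a minimal cover.
  For a fixed bracket, the product over all samples of \<open>sqrt (g \<pi> / P\<^sub>\<theta>\<^sub>s) / \<rho>\<close>, where \<open>\<rho>\<close>
  is the Hellinger affinity between \<open>g \<pi>\<close> and \<open>P\<^sub>\<theta>\<^sub>s\<close>, is a nonnegative supermartingale along
  the data; by Markov's inequality and a union bound it stays below \<open>c \<sim> m K / \<delta>\<close> at every
  iteration, except with probability \<open>\<delta>\<close> (or \<open>3 \<delta> / 4\<close> when \<open>eps0 > 0\<close>). A model \<open>\<theta>0\<close> of the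
  confidence set lies in some bracket, and its log-likelihood is at most \<open>\<beta>0\<close> plus a slack \<open>r\<close>
  below that of \<open>\<theta>s\<close>; as \<open>P\<^sub>\<theta>\<^sub>0 \<le> g \<pi>\<close>, taking logarithms gives
  \<open>\<Sum> - ln \<rho> \<le> ln c + (r + \<beta>0) / 2\<close>, while each squared Hellinger distance is at most
  \<open>4/3 (1 - \<rho>) + 8/3 \<eta>\<close>.

  The slack accounts for misspecification: \<open>\<theta>s\<close> need not lie in the class, but some model \<open>\<theta>b\<close>
  is \<open>2 eps0\<close>-close to it in Renyi divergence, and \<open>(P\<^sub>\<theta>\<^sub>s / P\<^sub>\<theta>\<^sub>b)\<^bsup>\<alpha> - 1\<^esup>\<close> is another
  supermartingale, so that \<open>\<theta>b\<close> nearly attains the likelihood of \<open>\<theta>s\<close> except with probability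
  \<open>\<delta> / 4\<close>. When \<open>eps0 = 0\<close>, models closer and closer to \<open>\<theta>s\<close> remove the slack.
\<close>

section \<open>Trajectory distributions\<close>

abbreviation histories :: "nat \<Rightarrow> ('o,'a) hist set" where
  "histories n \<equiv> {\<tau>. length \<tau> = n}"

lemma finite_histories: "finite (histories n :: ('o::finite,'a::finite) hist set)"
  using finite_lists_length_eq[of "UNIV :: ('o \<times> 'a) set" n] by simp

lemma model_prob_nonneg: "0 \<le> model_prob \<theta> \<tau>"
  unfolding model_prob_def by (rule prod_nonneg) simp

lemma pol_prob_nonneg: "0 \<le> pol_prob \<pi> \<tau>"
  unfolding pol_prob_def by (rule prod_nonneg) simp

lemma pol_prob_le_1: "pol_prob \<pi> \<tau> \<le> 1"
  unfolding pol_prob_def by (rule prod_le_1) (simp add: pmf_le_1)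

lemma prod_prefixes_snoc:
  "(\<Prod>t<length (\<tau> @ [x]). f (take t (\<tau> @ [x])) ((\<tau> @ [x]) ! t)) = (\<Prod>t<length \<tau>. f (take t \<tau>) (\<tau> ! t)) * f \<tau> x"
proof -
  have "(\<Prod>t<length \<tau>. f (take t (\<tau> @ [x])) ((\<tau> @ [x]) ! t)) = (\<Prod>t<length \<tau>. f (take t \<tau>) (\<tau> ! t))"
    by (intro prod.cong) (auto simp: nth_append)
  then show ?thesis by (simp add: prod.lessThan_Suc)
qed

lemma model_prob_snoc: "model_prob \<theta> (\<tau> @ [(ob, a)]) = model_prob \<theta> \<tau> * pmf (\<theta> \<tau>) ob"
  unfolding model_prob_def by (subst prod_prefixes_snoc[where f = "\<lambda>\<sigma> x. pmf (\<theta> \<sigma>) (fst x)"]) simp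

lemma pol_prob_snoc: "pol_prob \<pi> (\<tau> @ [(ob, a)]) = pol_prob \<pi> \<tau> * pmf (\<pi> \<tau> ob) a"
  unfolding pol_prob_def by (subst prod_prefixes_snoc[where f = "\<lambda>\<sigma> x. pmf (\<pi> \<sigma> (fst x)) (snd x)"]) simp

lemma set_pmf_traj: "set_pmf (traj \<theta> \<pi> n) \<subseteq> histories n"
  by (induction n) (auto simp: set_bind_pmf)

lemma finite_set_pmf_traj: "finite (set_pmf (traj \<theta> \<pi> n :: ('o::finite,'a::finite) hist pmf))"
  by (rule finite_subset[OF set_pmf_traj finite_histories])

lemma sum_pmf_traj: "(\<Sum>\<tau>\<in>histories n. pmf (traj \<theta> \<pi> n) \<tau>) = (1::real)"
  for \<theta> :: "('o::finite,'a::finite) model"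
  by (rule sum_pmf_eq_1[OF finite_histories set_pmf_traj])

lemma pmf_bind_eq_single:
  assumes "\<And>x. x \<in> set_pmf M \<Longrightarrow> pmf (f x) y \<noteq> 0 \<Longrightarrow> x = x0"
  shows "pmf (M \<bind> f) y = pmf M x0 * pmf (f x0) y"
  by (subst pmf_bind, subst integral_measure_pmf_real[of "{x0}"]) (use assms in auto)

lemma pmf_traj: "length \<tau> = n \<Longrightarrow> pmf (traj \<theta> \<pi> n) \<tau> = model_prob \<theta> \<tau> * pol_prob \<pi> \<tau>"
proof (induction n arbitrary: \<tau>)
  case 0
  then show ?case by (simp add: model_prob_def pol_prob_def)
next
  case (Suc n)
  then obtain \<tau>' ob a where \<tau>: "\<tau> = \<tau>' @ [(ob, a)]" and len: "length \<tau>' = n"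
    by (metis length_Suc_conv_rev prod.collapse)
  let ?step = "\<lambda>\<sigma> ob'. \<pi> \<sigma> ob' \<bind> (\<lambda>a'. return_pmf (\<sigma> @ [(ob', a')]))"
  have "pmf (traj \<theta> \<pi> (Suc n)) \<tau> = pmf (traj \<theta> \<pi> n) \<tau>' * pmf (\<theta> \<tau>' \<bind> ?step \<tau>') \<tau>"
    unfolding traj.simps by (rule pmf_bind_eq_single) (auto simp: \<tau> set_pmf_iff[symmetric] set_bind_pmf)
  also have "pmf (\<theta> \<tau>' \<bind> ?step \<tau>') \<tau> = pmf (\<theta> \<tau>') ob * pmf (?step \<tau>' ob) \<tau>"
    by (rule pmf_bind_eq_single) (auto simp: \<tau> set_pmf_iff[symmetric])
  also have "pmf (?step \<tau>' ob) \<tau> = pmf (\<pi> \<tau>' ob) a"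
    by (subst pmf_bind_eq_single[of _ _ _ a]) (auto simp: \<tau> pmf_return indicator_def)
  finally show ?case
    using Suc.IH[OF len] by (simp add: \<tau> model_prob_snoc pol_prob_snoc)
qed

section \<open>Likelihood-ratio products along the data\<close>

lemma set_pmf_data_pmf:
  "D \<in> set_pmf (data_pmf \<theta>s Q H sel n) \<Longrightarrow> length D = n \<and>
     (\<forall>t<n. \<forall>h\<in>{1..H}. (D ! t) h \<in> set_pmf (traj \<theta>s (nu Q h (sel (take t D))) H))"
proof (induction n arbitrary: D)
  case (Suc n)
  from Suc.prems obtain D' X where "D = D' @ [X]" and D': "D' \<in> set_pmf (data_pmf \<theta>s Q H sel n)"
    and "\<forall>h\<in>{1..H}. X h \<in> set_pmf (traj \<theta>s (nu Q h (sel D')) H)"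
    by (auto simp: set_bind_pmf set_Pi_pmf PiE_dflt_def)
  then show ?case
    using Suc.IH[OF D'] by (auto simp: nth_append less_Suc_eq)
qed simp

lemma map_pmf_take_data_pmf:
  "j \<le> n \<Longrightarrow> map_pmf (take j) (data_pmf \<theta>s Q H sel n) = data_pmf \<theta>s Q H sel j"
proof (induction n)
  case (Suc n)
  show ?case
  proof (cases "j = Suc n")
    case True
    then show ?thesis
      by (auto intro!: map_pmf_idI dest: set_pmf_data_pmf simp del: data_pmf.simps)
  next
    case False
    then have j: "j \<le> n" using Suc.prems by simp
    have "map_pmf (take j) (data_pmf \<theta>s Q H sel (Suc n)) =
        data_pmf \<theta>s Q H sel n \<bind> (\<lambda>D. return_pmf (take j D))"
      unfolding data_pmf.simps map_bind_pmf
      using j by (intro bind_pmf_cong refl) (auto simp: map_pmf_comp dest!: set_pmf_data_pmf)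
    then show ?thesis using Suc.IH[OF j] by (simp add: map_pmf_def)
  qed
qed simp

definition sample_prod :: "nat \<Rightarrow> (('o,'a) data list \<Rightarrow> nat \<Rightarrow> ('o,'a) hist \<Rightarrow> real) \<Rightarrow> nat
     \<Rightarrow> ('o,'a) data list \<Rightarrow> real" where
  "sample_prod H F j D = (\<Prod>t<j. \<Prod>h\<in>{1..H}. F (take t D) h ((D ! t) h))"

lemma sample_prod_take: "j \<le> k \<Longrightarrow> sample_prod H F j (take k D) = sample_prod H F j D"
  unfolding sample_prod_def by (intro prod.cong refl) (simp add: min_def)

lemma sample_prod_snoc:
  "sample_prod H F (Suc (length D)) (D @ [X]) = sample_prod H F (length D) D * (\<Prod>h\<in>{1..H}. F D h (X h))"
proof -
  have "sample_prod H F (length D) (D @ [X]) = sample_prod H F (length D) D"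
    unfolding sample_prod_def by (intro prod.cong) (auto simp: nth_append)
  then show ?thesis by (simp add: sample_prod_def prod.lessThan_Suc)
qed

lemma sample_prod_nonneg: "(\<And>D h x. 0 \<le> F D h x) \<Longrightarrow> 0 \<le> sample_prod H F j D"
  unfolding sample_prod_def by (intro prod_nonneg) auto

lemma sample_prod_pos:
  "(\<And>t h. t < j \<Longrightarrow> h \<in> {1..H} \<Longrightarrow> 0 < F (take t D) h ((D ! t) h)) \<Longrightarrow> 0 < sample_prod H F j D"
  unfolding sample_prod_def by (intro prod_pos) auto

lemma ln_sample_prod:
  assumes "\<And>t h. t < j \<Longrightarrow> h \<in> {1..H} \<Longrightarrow> 0 < F (take t D) h ((D ! t) h)"
  shows "ln (sample_prod H F j D) = (\<Sum>t<j. \<Sum>h\<in>{1..H}. ln (F (take t D) h ((D ! t) h)))"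
proof -
  have "ln (sample_prod H F j D) = (\<Sum>t<j. ln (\<Prod>h\<in>{1..H}. F (take t D) h ((D ! t) h)))"
    unfolding sample_prod_def using assms by (intro ln_prod) (auto simp: prod_pos less_imp_neq[symmetric])
  also have "\<dots> = (\<Sum>t<j. \<Sum>h\<in>{1..H}. ln (F (take t D) h ((D ! t) h)))"
    using assms by (intro sum.cong refl ln_prod) (auto simp: less_imp_neq[symmetric])
  finally show ?thesis .
qed

lemma nn_integral_sample_prod_le_1:
  assumes nonneg: "\<And>D h x. 0 \<le> F D h x"
    and factor: "\<And>D h. h \<in> {1..H} \<Longrightarrow> (\<integral>\<^sup>+x. ennreal (F D h x) \<partial>traj \<theta>s (nu Q h (sel D)) H) \<le> 1"
  shows "(\<integral>\<^sup>+D. ennreal (sample_prod H F n D) \<partial>data_pmf \<theta>s Q H sel n) \<le> 1"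
proof (induction n)
  case 0
  then show ?case by (simp add: sample_prod_def measure_pmf.emeasure_space_1)
next
  case (Suc n)
  let ?X = "\<lambda>D. Pi_pmf {1..H} [] (\<lambda>h. traj \<theta>s (nu Q h (sel D)) H)"
  have step: "(\<integral>\<^sup>+X. ennreal (sample_prod H F (Suc n) (D @ [X])) \<partial>?X D) \<le> ennreal (sample_prod H F n D)"
    if "D \<in> set_pmf (data_pmf \<theta>s Q H sel n)" for D
  proof -
    have "(\<integral>\<^sup>+X. ennreal (sample_prod H F (Suc n) (D @ [X])) \<partial>?X D)
        = ennreal (sample_prod H F n D) * (\<integral>\<^sup>+X. (\<Prod>h\<in>{1..H}. ennreal (F D h (X h))) \<partial>?X D)"
      using set_pmf_data_pmf[OF that] nonneg sample_prod_snoc[of H F D]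
      by (simp add: ennreal_mult' prod_ennreal sample_prod_nonneg nn_integral_cmult prod_nonneg)
    also have "\<dots> = ennreal (sample_prod H F n D) *
        (\<Prod>h\<in>{1..H}. \<integral>\<^sup>+x. ennreal (F D h x) \<partial>traj \<theta>s (nu Q h (sel D)) H)"
      by (subst nn_integral_prod_Pi_pmf) simp_all
    also have "\<dots> \<le> ennreal (sample_prod H F n D) * 1"
      using factor by (intro mult_left_mono prod_le_1) auto
    finally show ?thesis by simp
  qed
  have "(\<integral>\<^sup>+D. ennreal (sample_prod H F (Suc n) D) \<partial>data_pmf \<theta>s Q H sel (Suc n))
      = (\<integral>\<^sup>+D. (\<integral>\<^sup>+X. ennreal (sample_prod H F (Suc n) (D @ [X])) \<partial>?X D) \<partial>data_pmf \<theta>s Q H sel n)"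
    by simp
  also have "\<dots> \<le> (\<integral>\<^sup>+D. ennreal (sample_prod H F n D) \<partial>data_pmf \<theta>s Q H sel n)"
    using step by (intro nn_integral_mono_AE) (simp add: AE_measure_pmf_iff)
  finally show ?case using Suc.IH by simp
qed

lemma measure_pmf_Markov:
  fixes p :: "'x pmf"
  assumes "(\<integral>\<^sup>+x. ennreal (f x) \<partial>p) \<le> 1" and "0 < c"
  shows "measure_pmf.prob p {x. c \<le> f x} \<le> 1 / c"
proof -
  let ?A = "{x. c \<le> f x}"
  have "ennreal c * emeasure p ?A = (\<integral>\<^sup>+x. ennreal c * indicator ?A x \<partial>p)"
    by (simp add: nn_integral_cmult_indicator)
  also have "\<dots> \<le> (\<integral>\<^sup>+x. ennreal (f x) \<partial>p)"
    by (intro nn_integral_mono) (auto split: split_indicator intro: ennreal_leI)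
  also have "\<dots> \<le> 1" by fact
  finally have "c * measure_pmf.prob p ?A \<le> 1"
    using assms(2) by (simp add: measure_pmf.emeasure_eq_measure ennreal_mult'[symmetric])
  then show ?thesis using assms(2) by (simp add: field_simps mult.commute)
qed

lemma prob_sample_prod_ge:
  assumes "j \<le> K" and "0 < c"
    and "\<And>D h x. 0 \<le> F D h x"
    and "\<And>D h. h \<in> {1..H} \<Longrightarrow> (\<integral>\<^sup>+x. ennreal (F D h x) \<partial>traj \<theta>s (nu Q h (sel D)) H) \<le> 1"
  shows "measure_pmf.prob (data_pmf \<theta>s Q H sel K) {D. c \<le> sample_prod H F j D} \<le> 1 / c"
proof -
  have "measure_pmf.prob (data_pmf \<theta>s Q H sel K) {D. c \<le> sample_prod H F j D}
      = measure_pmf.prob (map_pmf (take j) (data_pmf \<theta>s Q H sel K)) {D. c \<le> sample_prod H F j D}"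
    by (simp add: vimage_def sample_prod_take)
  also have "\<dots> = measure_pmf.prob (data_pmf \<theta>s Q H sel j) {D. c \<le> sample_prod H F j D}"
    by (simp only: map_pmf_take_data_pmf[OF assms(1)])
  also have "\<dots> \<le> 1 / c"
    by (intro measure_pmf_Markov nn_integral_sample_prod_le_1 assms(2-4))
  finally show ?thesis .
qed

lemma prob_UN_sample_prod_ge:
  assumes "0 < c"
    and "\<And>D h x. 0 \<le> F D h x"
    and "\<And>D h. h \<in> {1..H} \<Longrightarrow> (\<integral>\<^sup>+x. ennreal (F D h x) \<partial>traj \<theta>s (nu Q h (sel D)) H) \<le> 1"
  shows "measure_pmf.prob (data_pmf \<theta>s Q H sel K) (\<Union>j<K. {D. c \<le> sample_prod H F j D}) \<le> real K / c"
proof -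
  have "measure_pmf.prob (data_pmf \<theta>s Q H sel K) (\<Union>j<K. {D. c \<le> sample_prod H F j D})
      \<le> (\<Sum>j<K. measure_pmf.prob (data_pmf \<theta>s Q H sel K) {D. c \<le> sample_prod H F j D})"
    by (rule measure_pmf.finite_measure_subadditive_finite) auto
  also have "\<dots> \<le> (\<Sum>j<K. 1 / c)"
    using assms by (intro sum_mono prob_sample_prod_ge) auto
  finally show ?thesis
    by simp
qed

section \<open>Hellinger distance to a bracket\<close>

lemma D_H2_eq_sum:
  assumes "finite S" and "set_pmf P \<subseteq> S"
  shows "D_H2 P Q = 1 - (\<Sum>x\<in>S. sqrt (pmf P x * pmf Q x))"
proof -
  have "(\<Sum>\<^sub>\<infinity>x. sqrt (pmf P x * pmf Q x)) = (\<Sum>\<^sub>\<infinity>x\<in>S. sqrt (pmf P x * pmf Q x))"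
    using assms(2) by (intro infsum_cong_neutral) (auto simp: set_pmf_eq)
  then show ?thesis
    using assms(1) by (simp add: D_H2_def)
qed

text \<open>The constants come from \<open>(A - B)\<^sup>2 \<le> 4/3 (U - B)\<^sup>2 + 4 (A - U)\<^sup>2\<close>.\<close>

lemma affinity_gap_le_upper_envelope:
  fixes A B U :: "'x \<Rightarrow> real"
  assumes "finite S"
    and A: "\<And>x. x \<in> S \<Longrightarrow> 0 \<le> A x" and U: "\<And>x. x \<in> S \<Longrightarrow> A x \<le> U x"
    and A1: "(\<Sum>x\<in>S. (A x)\<^sup>2) = 1" and B1: "(\<Sum>x\<in>S. (B x)\<^sup>2) = 1"
    and excess: "(\<Sum>x\<in>S. (U x)\<^sup>2 - (A x)\<^sup>2) \<le> e"
  shows "1 - (\<Sum>x\<in>S. A x * B x) \<le> 4/3 * (1 - (\<Sum>x\<in>S. U x * B x)) + 8/3 * e"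
proof -
  define E where "E = (\<Sum>x\<in>S. (U x)\<^sup>2 - (A x)\<^sup>2)"
  have pointwise: "(A x - B x)\<^sup>2 \<le> 4/3 * (U x - B x)\<^sup>2 + 4 * ((U x)\<^sup>2 - (A x)\<^sup>2)" if "x \<in> S" for x
  proof -
    have "(A x - B x)\<^sup>2 = 4/3 * (U x - B x)\<^sup>2 + 4 * (A x - U x)\<^sup>2 - ((U x - B x) - 3 * (A x - U x))\<^sup>2 / 3"
      by (simp add: power2_eq_square field_simps)
    also have "\<dots> \<le> 4/3 * (U x - B x)\<^sup>2 + 4 * (A x - U x)\<^sup>2"
      by simp
    also have "(A x - U x)\<^sup>2 \<le> (U x)\<^sup>2 - (A x)\<^sup>2"
      using A[OF that] U[OF that] by (simp add: power2_eq_square algebra_simps mult_left_mono)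
    finally show ?thesis by simp
  qed
  have "2 - 2 * (\<Sum>x\<in>S. A x * B x) = (\<Sum>x\<in>S. (A x - B x)\<^sup>2)"
    using A1 B1 by (simp add: power2_diff sum.distrib sum_subtractf sum_distrib_left mult.assoc)
  also have "\<dots> \<le> (\<Sum>x\<in>S. 4/3 * (U x - B x)\<^sup>2 + 4 * ((U x)\<^sup>2 - (A x)\<^sup>2))"
    by (intro sum_mono pointwise)
  also have "\<dots> = 4/3 * (\<Sum>x\<in>S. (U x - B x)\<^sup>2) + 4 * E"
    unfolding E_def by (simp add: sum.distrib sum_distrib_left)
  also have "(\<Sum>x\<in>S. (U x - B x)\<^sup>2) = E + (\<Sum>x\<in>S. (A x)\<^sup>2) + (\<Sum>x\<in>S. (B x)\<^sup>2) - 2 * (\<Sum>x\<in>S. U x * B x)"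
    unfolding E_def by (simp add: power2_diff sum.distrib sum_subtractf sum_distrib_left algebra_simps)
  finally show ?thesis
    using excess A1 B1 unfolding E_def[symmetric] by argo
qed

lemma bracket_width_less:
  fixes l g :: "('o::finite,'a::finite) hist \<Rightarrow> real"
  assumes "is_bracket H \<eta> l g"
  shows "(\<Sum>\<tau>\<in>histories H. \<bar>l \<tau> - g \<tau>\<bar> * pol_prob \<pi> \<tau>) < \<eta>"
proof -
  have "bdd_above (range (\<lambda>\<pi>::('o,'a) policy. \<Sum>\<tau>\<in>histories H. \<bar>l \<tau> - g \<tau>\<bar> * pol_prob \<pi> \<tau>))"
    by (intro bdd_aboveI2[where M = "\<Sum>\<tau>\<in>histories H. \<bar>l \<tau> - g \<tau>\<bar>"] sum_mono)
       (simp add: mult_left_le pol_prob_le_1 pol_prob_nonneg)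
  then have "(\<Sum>\<tau>\<in>histories H. \<bar>l \<tau> - g \<tau>\<bar> * pol_prob \<pi> \<tau>)
      \<le> (SUP \<pi>'::('o,'a) policy. \<Sum>\<tau>\<in>histories H. \<bar>l \<tau> - g \<tau>\<bar> * pol_prob \<pi>' \<tau>)"
    by (rule cSUP_upper[OF UNIV_I])
  then show ?thesis
    using assms unfolding is_bracket_def by simp
qed

definition in_bracket :: "nat \<Rightarrow> (('o,'a) hist \<Rightarrow> real) \<Rightarrow> (('o,'a) hist \<Rightarrow> real) \<Rightarrow> ('o,'a) model \<Rightarrow> bool" where
  "in_bracket H l g \<theta> \<longleftrightarrow> (\<forall>\<tau>. length \<tau> = H \<longrightarrow> l \<tau> \<le> model_prob \<theta> \<tau> \<and> model_prob \<theta> \<tau> \<le> g \<tau>)"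

text \<open>The cut-off \<open>max (g x) 0\<close> keeps the factors nonnegative (\<open>sqrt\<close> is odd on the reals): an upper
  bracket function may be negative away from the models it covers.\<close>

definition bracket_affinity :: "nat \<Rightarrow> ('o,'a) model \<Rightarrow> ('o,'a) policy \<Rightarrow> (('o,'a) hist \<Rightarrow> real) \<Rightarrow> real" where
  "bracket_affinity H \<theta>s \<pi> g = (\<Sum>x\<in>histories H. sqrt (max (g x) 0 * pol_prob \<pi> x * pmf (traj \<theta>s \<pi> H) x))"

lemma D_H2_traj_le_bracket_affinity:
  fixes \<theta> \<theta>s :: "('o::finite,'a::finite) model"
  assumes bracket: "is_bracket H \<eta> l g"
    and cover: "in_bracket H l g \<theta>"
  shows "D_H2 (traj \<theta> \<pi> H) (traj \<theta>s \<pi> H) \<le> 4/3 * (1 - bracket_affinity H \<theta>s \<pi> g) + 8/3 * \<eta>"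
proof -
  let ?P = "pmf (traj \<theta> \<pi> H)" and ?S = "pmf (traj \<theta>s \<pi> H)"
  have g: "0 \<le> g x" and P: "?P x = model_prob \<theta> x * pol_prob \<pi> x" if "x \<in> histories H" for x
    using that cover model_prob_nonneg[of \<theta> x] by (auto simp: in_bracket_def pmf_traj intro: order_trans)
  have "(\<Sum>x\<in>histories H. (sqrt (g x * pol_prob \<pi> x))\<^sup>2 - (sqrt (?P x))\<^sup>2)
      = (\<Sum>x\<in>histories H. (g x - model_prob \<theta> x) * pol_prob \<pi> x)"
    by (intro sum.cong refl) (simp add: P g pol_prob_nonneg model_prob_nonneg algebra_simps)
  also have "\<dots> \<le> (\<Sum>x\<in>histories H. \<bar>l x - g x\<bar> * pol_prob \<pi> x)"
    using cover by (intro sum_mono mult_right_mono) (auto simp: in_bracket_def pol_prob_nonneg)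
  also have "\<dots> \<le> \<eta>"
    using bracket_width_less[OF bracket] by (rule less_imp_le)
  finally have excess: "(\<Sum>x\<in>histories H. (sqrt (g x * pol_prob \<pi> x))\<^sup>2 - (sqrt (?P x))\<^sup>2) \<le> \<eta>" .
  have "1 - (\<Sum>x\<in>histories H. sqrt (?P x) * sqrt (?S x))
      \<le> 4/3 * (1 - (\<Sum>x\<in>histories H. sqrt (g x * pol_prob \<pi> x) * sqrt (?S x))) + 8/3 * \<eta>"
  proof (rule affinity_gap_le_upper_envelope[OF finite_histories _ _ _ _ excess])
    fix x :: "('o,'a) hist" assume x: "x \<in> histories H"
    show "sqrt (?P x) \<le> sqrt (g x * pol_prob \<pi> x)"
      using cover x by (simp add: in_bracket_def P mult_right_mono pol_prob_nonneg)
  qed (simp_all add: sum_pmf_traj)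
  then show ?thesis
    unfolding bracket_affinity_def
    by (simp add: D_H2_eq_sum[OF finite_histories set_pmf_traj] real_sqrt_mult g)
qed

lemma pmf_traj_le_upper_bracket:
  assumes "in_bracket H l g \<theta>" and "length x = H"
  shows "pmf (traj \<theta> \<pi> H) x \<le> max (g x) 0 * pol_prob \<pi> x"
proof -
  have "pmf (traj \<theta> \<pi> H) x = model_prob \<theta> x * pol_prob \<pi> x"
    using assms(2) by (rule pmf_traj)
  also have "\<dots> \<le> max (g x) 0 * pol_prob \<pi> x"
    using assms unfolding in_bracket_def by (intro mult_right_mono) (auto simp: pol_prob_nonneg)
  finally show ?thesis .
qed

lemma bracket_affinity_pos:
  fixes \<theta>s :: "('o::finite,'a::finite) model"
  assumes "length x = H" and "0 < max (g x) 0 * pol_prob \<pi> x" and "0 < pmf (traj \<theta>s \<pi> H) x"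
  shows "0 < bracket_affinity H \<theta>s \<pi> g"
proof -
  have "0 < sqrt (max (g x) 0 * pol_prob \<pi> x * pmf (traj \<theta>s \<pi> H) x)"
    using assms(2,3) by simp
  also have "\<dots> \<le> bracket_affinity H \<theta>s \<pi> g"
    unfolding bracket_affinity_def using assms(1)
    by (intro member_le_sum finite_histories) (auto simp: pol_prob_nonneg)
  finally show ?thesis .
qed

definition bracket_factor :: "nat \<Rightarrow> ('o,'a) model \<Rightarrow> ('o,'a) policy \<Rightarrow> (('o,'a) hist \<Rightarrow> real)
     \<Rightarrow> ('o,'a) hist \<Rightarrow> real" where
  "bracket_factor H \<theta>s \<pi> g x =
     sqrt (max (g x) 0 * pol_prob \<pi> x / pmf (traj \<theta>s \<pi> H) x) / bracket_affinity H \<theta>s \<pi> g"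

lemma bracket_affinity_nonneg: "0 \<le> bracket_affinity H \<theta>s \<pi> g"
  unfolding bracket_affinity_def by (intro sum_nonneg) (simp add: pol_prob_nonneg)

lemma bracket_factor_nonneg: "0 \<le> bracket_factor H \<theta>s \<pi> g x"
  unfolding bracket_factor_def by (simp add: bracket_affinity_nonneg pol_prob_nonneg)

lemma nn_integral_bracket_factor:
  fixes \<theta>s :: "('o::finite,'a::finite) model"
  shows "(\<integral>\<^sup>+x. ennreal (bracket_factor H \<theta>s \<pi> g x) \<partial>traj \<theta>s \<pi> H) \<le> 1"
proof -
  let ?S = "pmf (traj \<theta>s \<pi> H)" and ?\<rho> = "bracket_affinity H \<theta>s \<pi> g"
  have "(\<integral>\<^sup>+x. ennreal (bracket_factor H \<theta>s \<pi> g x) \<partial>traj \<theta>s \<pi> H)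
      = (\<Sum>x\<in>histories H. ennreal (bracket_factor H \<theta>s \<pi> g x) * ?S x)"
    by (rule nn_integral_measure_pmf_support[OF finite_histories]) (auto dest: set_pmf_traj[THEN subsetD])
  also have "\<dots> = ennreal (\<Sum>x\<in>histories H. bracket_factor H \<theta>s \<pi> g x * ?S x)"
    by (simp add: ennreal_mult'[symmetric] sum_ennreal bracket_factor_nonneg)
  also have "(\<Sum>x\<in>histories H. bracket_factor H \<theta>s \<pi> g x * ?S x) = ?\<rho> / ?\<rho>"
  proof -
    have "sqrt (max (g x) 0 * pol_prob \<pi> x / ?S x) * ?S x = sqrt (max (g x) 0 * pol_prob \<pi> x * ?S x)" for x
      by (cases "?S x = 0") (simp_all add: real_sqrt_divide real_sqrt_mult field_simps)
    then show ?thesis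
      unfolding bracket_factor_def by (simp add: sum_divide_distrib[symmetric] bracket_affinity_def field_simps)
  qed
  also have "ennreal (?\<rho> / ?\<rho>) \<le> 1"
    by simp
  finally show ?thesis .
qed

section \<open>Renyi divergence\<close>

lemma ln_less_minus_one: "0 < x \<Longrightarrow> x \<noteq> 1 \<Longrightarrow> ln x < x - 1" for x :: real
  using ln_eq_minus_one[of x] ln_le_minus_one[of x] by fastforce

lemma diff_le_mult_ln_div:
  fixes p q :: real
  assumes "0 < p" and "0 < q"
  shows "p - q \<le> p * ln (p / q)"
proof -
  have "ln (q / p) \<le> q / p - 1"
    using assms by (intro ln_le_minus_one) simp
  then have "p * (- ln (p / q)) \<le> p * (q / p - 1)"
    using assms by (intro mult_left_mono) (simp_all add: ln_div)
  then show ?thesis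
    using assms by (simp add: algebra_simps)
qed

lemma jensen_ln:
  fixes p Y :: "'x \<Rightarrow> real"
  assumes "finite S" and p: "\<And>y. y \<in> S \<Longrightarrow> 0 \<le> p y" and p1: "(\<Sum>y\<in>S. p y) = 1"
    and Y: "\<And>y. y \<in> S \<Longrightarrow> 0 < Y y"
  shows "(\<Sum>y\<in>S. p y * ln (Y y)) \<le> ln (\<Sum>y\<in>S. p y * Y y)"
proof -
  define m where "m = (\<Sum>y\<in>S. p y * Y y)"
  have "\<not> (\<forall>y\<in>S. p y = 0)"
  proof
    assume "\<forall>y\<in>S. p y = 0"
    then have "sum p S = 0" by simp
    with p1 show False by simp
  qed
  then obtain y0 where y0: "y0 \<in> S" "0 < p y0"
    using p by (auto simp: order_less_le)
  have m: "0 < m"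
    unfolding m_def using p Y y0
    by (intro sum_pos2[OF \<open>finite S\<close> y0(1)]) (auto intro!: mult_nonneg_nonneg simp: less_imp_le)
  have "(\<Sum>y\<in>S. p y * ln (Y y)) \<le> (\<Sum>y\<in>S. p y * (ln m + Y y / m - 1))"
  proof (intro sum_mono mult_left_mono)
    fix y assume y: "y \<in> S"
    have "ln (Y y / m) \<le> Y y / m - 1"
      using Y[OF y] m by (intro ln_le_minus_one) simp
    then show "ln (Y y) \<le> ln m + Y y / m - 1"
      using Y[OF y] m by (simp add: ln_div)
  qed (use p in simp)
  also have "\<dots> = ln m * (\<Sum>y\<in>S. p y) + (\<Sum>y\<in>S. p y * Y y) / m - (\<Sum>y\<in>S. p y)"
    by (simp add: sum_distrib_left[symmetric] sum_divide_distrib sum_subtractf sum.distrib ring_distribs mult_ac)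
  also have "\<dots> = ln m"
    using p1 m unfolding m_def by simp
  finally show ?thesis unfolding m_def .
qed

lemma pmf_pos_of_D_R_le:
  assumes "D_R \<alpha> P Q \<le> ereal \<epsilon>" and "x \<in> set_pmf P"
  shows "0 < pmf Q x"
  using assms pmf_nonneg[of Q x] unfolding D_R_def by (auto split: if_splits simp: order.order_iff_strict)

lemma renyi_moment_eq:
  fixes p q :: real
  assumes "0 < p" and "0 < q"
  shows "p * (p / q) powr (\<alpha> - 1) = p powr \<alpha> * q powr (1 - \<alpha>)"
proof -
  have "p * (p / q) powr (\<alpha> - 1) = p powr 1 * (p powr (\<alpha> - 1) / q powr (\<alpha> - 1))"
    using assms by (simp add: powr_divide)
  also have "\<dots> = p powr \<alpha> * q powr (1 - \<alpha>)"
    using assms by (simp add: powr_add[symmetric] powr_minus_divide[symmetric] powr_diff)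
  finally show ?thesis .
qed

lemma sum_renyi_moment_eq:
  assumes "\<And>x. x \<in> set_pmf P \<Longrightarrow> 0 < pmf Q x"
  shows "(\<Sum>x\<in>set_pmf P. pmf P x * (pmf P x / pmf Q x) powr (\<alpha> - 1))
    = (\<Sum>x\<in>set_pmf P. pmf P x powr \<alpha> * pmf Q x powr (1 - \<alpha>))"
  using assms by (intro sum.cong refl renyi_moment_eq) (simp_all add: set_pmf_eq')

lemma renyi_moment_le:
  assumes "\<alpha> > 1" and "finite (set_pmf P)" and D_R: "D_R \<alpha> P Q \<le> ereal \<epsilon>"
  shows "(\<Sum>x\<in>set_pmf P. pmf P x * (pmf P x / pmf Q x) powr (\<alpha> - 1)) \<le> exp ((\<alpha> - 1) * \<epsilon>)"
proof -
  let ?M = "\<Sum>x\<in>set_pmf P. pmf P x powr \<alpha> * pmf Q x powr (1 - \<alpha>)"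
  obtain y where y: "y \<in> set_pmf P"
    using set_pmf_not_empty[of P] by blast
  have "0 < ?M"
    using y pmf_pos_of_D_R_le[OF D_R y] assms(2)
    by (intro sum_pos2[OF assms(2) y]) (auto simp: set_pmf_eq')
  moreover have "ln ?M \<le> (\<alpha> - 1) * \<epsilon>"
    using D_R assms(1) unfolding D_R_def by (auto split: if_splits simp: divide_le_eq mult.commute)
  ultimately have "?M \<le> exp ((\<alpha> - 1) * \<epsilon>)"
    by (metis exp_le_cancel_iff exp_ln)
  then show ?thesis
    using sum_renyi_moment_eq[OF pmf_pos_of_D_R_le[OF D_R]] by simp
qed

definition renyi_factor :: "real \<Rightarrow> real \<Rightarrow> 'b pmf \<Rightarrow> 'b pmf \<Rightarrow> 'b \<Rightarrow> real" where
  "renyi_factor \<alpha> \<epsilon> P Q x = (pmf P x / pmf Q x) powr (\<alpha> - 1) * exp (- (\<alpha> - 1) * \<epsilon>)"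

lemma renyi_factor_nonneg: "0 \<le> renyi_factor \<alpha> \<epsilon> P Q x"
  by (simp add: renyi_factor_def)

lemma nn_integral_renyi_factor_le_1:
  assumes "\<alpha> > 1" and fin: "finite (set_pmf P)" and D_R: "D_R \<alpha> P Q \<le> ereal \<epsilon>"
  shows "(\<integral>\<^sup>+x. ennreal (renyi_factor \<alpha> \<epsilon> P Q x) \<partial>P) \<le> 1"
proof -
  let ?f = "renyi_factor \<alpha> \<epsilon> P Q"
  have "(\<Sum>x\<in>set_pmf P. ?f x * pmf P x)
      = (\<Sum>x\<in>set_pmf P. pmf P x * (pmf P x / pmf Q x) powr (\<alpha> - 1)) * exp (- (\<alpha> - 1) * \<epsilon>)"
    unfolding sum_distrib_right by (intro sum.cong refl) (simp add: renyi_factor_def mult_ac)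
  also have "\<dots> \<le> exp ((\<alpha> - 1) * \<epsilon>) * exp (- (\<alpha> - 1) * \<epsilon>)"
    by (intro mult_right_mono renyi_moment_le assms) simp
  also have "\<dots> = 1"
    by (simp add: exp_add[symmetric] algebra_simps)
  finally have "(\<Sum>x\<in>set_pmf P. ?f x * pmf P x) \<le> 1" .
  moreover have "(\<integral>\<^sup>+x. ennreal (?f x) \<partial>P) = (\<Sum>x\<in>set_pmf P. ennreal (?f x * pmf P x))"
    by (subst nn_integral_measure_pmf_finite[OF fin])
      (auto intro!: sum.cong simp: ennreal_mult renyi_factor_nonneg)
  ultimately show ?thesis
    by (simp add: sum_ennreal renyi_factor_nonneg)
qed

lemma kl_le_renyi:
  assumes "\<alpha> > 1" and fin: "finite (set_pmf P)" and Q: "\<And>x. x \<in> set_pmf P \<Longrightarrow> 0 < pmf Q x"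
  shows "(\<Sum>x\<in>set_pmf P. pmf P x * ln (pmf P x / pmf Q x))
    \<le> ln (\<Sum>x\<in>set_pmf P. pmf P x powr \<alpha> * pmf Q x powr (1 - \<alpha>)) / (\<alpha> - 1)"
proof -
  have ratio: "0 < pmf P x / pmf Q x" if "x \<in> set_pmf P" for x
    using Q[OF that] that by (simp add: set_pmf_eq')
  have "(\<Sum>x\<in>set_pmf P. pmf P x * ln (pmf P x / pmf Q x)) * (\<alpha> - 1)
      = (\<Sum>x\<in>set_pmf P. pmf P x * ln ((pmf P x / pmf Q x) powr (\<alpha> - 1)))"
    unfolding sum_distrib_right by (intro sum.cong refl) (simp add: mult_ac)
  also have "\<dots> \<le> ln (\<Sum>x\<in>set_pmf P. pmf P x * (pmf P x / pmf Q x) powr (\<alpha> - 1))"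
    by (intro jensen_ln[OF fin] sum_pmf_eq_1[OF fin]) (auto dest!: ratio)
  also have "\<dots> = ln (\<Sum>x\<in>set_pmf P. pmf P x powr \<alpha> * pmf Q x powr (1 - \<alpha>))"
    by (simp only: sum_renyi_moment_eq[OF Q])
  finally show ?thesis
    using assms(1) by (simp add: pos_le_divide_eq)
qed

lemma D_R_nonneg:
  assumes "\<alpha> > 1" and fin: "finite (set_pmf P)"
  shows "0 \<le> D_R \<alpha> P Q"
proof (cases "\<exists>x\<in>set_pmf P. pmf Q x = 0")
  case False
  then have Q: "0 < pmf Q x" if "x \<in> set_pmf P" for x
    using that pmf_nonneg[of Q x] by force
  have "0 \<le> (\<Sum>x\<in>set_pmf P. pmf P x - pmf Q x)"
    using sum_pmf_eq_1[OF fin, of P] measure_pmf.prob_le_1[of Q "set_pmf P"]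
    by (simp add: sum_subtractf measure_measure_pmf_finite[OF fin])
  also have "\<dots> \<le> (\<Sum>x\<in>set_pmf P. pmf P x * ln (pmf P x / pmf Q x))"
    using Q by (intro sum_mono diff_le_mult_ln_div) (auto simp: set_pmf_eq')
  also have "\<dots> \<le> ln (\<Sum>x\<in>set_pmf P. pmf P x powr \<alpha> * pmf Q x powr (1 - \<alpha>)) / (\<alpha> - 1)"
    by (rule kl_le_renyi[OF assms Q])
  finally show ?thesis
    using False unfolding D_R_def by simp
qed (simp add: D_R_def)

text \<open>A Renyi divergence small compared to \<open>p x\<close> forces \<open>q x \<ge> c p x\<close>: it dominates the single Bregman
  term \<open>p ln (p / q) - (p - q)\<close> at \<open>x\<close>, which exceeds \<open>p (c - 1 - ln c)\<close> as soon as \<open>q < c p\<close>.\<close>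

lemma bregman_term_le_D_R:
  assumes "\<alpha> > 1" and fin: "finite (set_pmf P)" and D_R: "D_R \<alpha> P Q \<le> ereal \<gamma>"
    and x: "x \<in> set_pmf P"
  shows "pmf P x * ln (pmf P x / pmf Q x) - (pmf P x - pmf Q x) \<le> \<gamma>"
proof -
  let ?S = "set_pmf P" and ?p = "pmf P" and ?q = "pmf Q"
  have Q: "0 < ?q y" if "y \<in> ?S" for y
    using pmf_pos_of_D_R_le[OF D_R that] .
  have "?p x * ln (?p x / ?q x) - (?p x - ?q x)
      \<le> ?p x * ln (?p x / ?q x) + (\<Sum>y\<in>?S - {x}. ?p y - ?q y)"
    using sum_pmf_eq_1[OF fin, of P] measure_pmf.prob_le_1[of Q ?S] x fin
    by (simp add: sum_subtractf sum.remove measure_measure_pmf_finite[OF fin])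
  also have "\<dots> \<le> ?p x * ln (?p x / ?q x) + (\<Sum>y\<in>?S - {x}. ?p y * ln (?p y / ?q y))"
    using Q by (intro add_left_mono sum_mono diff_le_mult_ln_div) (auto simp: set_pmf_eq')
  also have "\<dots> = (\<Sum>y\<in>?S. ?p y * ln (?p y / ?q y))"
    using x fin by (simp add: sum.remove)
  also have "\<dots> \<le> ln (\<Sum>y\<in>?S. ?p y powr \<alpha> * ?q y powr (1 - \<alpha>)) / (\<alpha> - 1)"
    by (rule kl_le_renyi[OF assms(1) fin Q])
  also have "\<dots> \<le> \<gamma>"
    using D_R unfolding D_R_def by (auto split: if_splits)
  finally show ?thesis .
qed

lemma mult_le_of_bregman_term_less:
  fixes p q c :: real
  assumes "0 < p" "0 < q" "0 < c" "c < 1"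
    and "p * ln (p / q) - (p - q) < p * (c - 1 - ln c)"
  shows "p * c \<le> q"
proof (rule ccontr)
  assume "\<not> p * c \<le> q"
  then have "0 < p - q / c"
    using assms by (simp add: field_simps)
  have "1 - q / (p * c) \<le> ln (p * c / q)"
    using ln_le_minus_one[of "q / (p * c)"] assms by (simp add: ln_div)
  then have "p * (1 - q / (p * c)) \<le> p * ln (p * c / q)"
    using assms by (intro mult_left_mono) simp_all
  moreover have "p * (1 - q / (p * c)) = p - q / c"
    using assms by (simp add: field_simps)
  moreover have "ln (p * c / q) = ln (p / q) + ln c"
    using assms by (simp add: ln_div ln_mult)
  moreover have "p * (c - 1 - ln c) + (1 - c) * (p - q / c) = q - q / c - p * ln c"
    using assms by (simp add: field_simps)
  moreover have "0 < (1 - c) * (p - q / c)"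
    using assms \<open>0 < p - q / c\<close> by simp
  ultimately show False
    using assms(5) by (simp add: distrib_left)
qed

lemma pmf_ge_of_D_R_less:
  assumes "\<alpha> > 1" and "finite (set_pmf P)" and "D_R \<alpha> P Q \<le> ereal \<gamma>" and x: "x \<in> set_pmf P"
    and "0 < c" "c < 1" and "\<gamma> < pmf P x * (c - 1 - ln c)"
  shows "c * pmf P x \<le> pmf Q x"
  using mult_le_of_bregman_term_less[of "pmf P x" "pmf Q x" c] bregman_term_le_D_R[OF assms(1-4)]
    pmf_pos_of_D_R_le[OF assms(3) x] assms(5-7) x
  by (simp add: set_pmf_eq' mult.commute)

section \<open>Log-likelihood of the data\<close>

definition sample_lik :: "nat \<Rightarrow> (nat \<Rightarrow> 'a::finite list set) \<Rightarrow> (('o,'a) data list \<Rightarrow> ('o,'a) policy)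
     \<Rightarrow> ('o,'a) model \<Rightarrow> ('o,'a) data list \<Rightarrow> nat \<Rightarrow> nat \<Rightarrow> real" where
  "sample_lik H Q sel \<theta> D t h = pmf (traj \<theta> (nu Q h (sel (take t D))) H) ((D ! t) h)"

definition sample_loglik :: "nat \<Rightarrow> (nat \<Rightarrow> 'a::finite list set) \<Rightarrow> (('o,'a) data list \<Rightarrow> ('o,'a) policy)
     \<Rightarrow> ('o,'a) model \<Rightarrow> ('o,'a) data list \<Rightarrow> nat \<Rightarrow> real" where
  "sample_loglik H Q sel \<theta> D j = (\<Sum>t<j. \<Sum>h\<in>{1..H}. ln (sample_lik H Q sel \<theta> D t h))"

lemma sum_ereal_or_MInf:
  "finite A \<Longrightarrow> (\<Sum>a\<in>A. if P a then ereal (r a) else -\<infinity>) = (if \<forall>a\<in>A. P a then ereal (\<Sum>a\<in>A. r a) else -\<infinity>)"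
  by (induction A rule: finite_induct) auto

lemma loglik_take:
  assumes "j \<le> length D"
  shows "loglik H Q sel (take j D) \<theta> =
    (if \<forall>t<j. \<forall>h\<in>{1..H}. 0 < sample_lik H Q sel \<theta> D t h
     then ereal (sample_loglik H Q sel \<theta> D j) else -\<infinity>)"
proof -
  have "loglik H Q sel (take j D) \<theta> = (\<Sum>t<j. \<Sum>h\<in>{1..H}. eln (sample_lik H Q sel \<theta> D t h))"
    unfolding loglik_def sample_lik_def using assms by (intro sum.cong refl) (auto simp: min_def)
  then show ?thesis
    by (simp add: eln_def sum_ereal_or_MInf sample_loglik_def)
qed

lemma loglik_take_eq_ereal:
  assumes "j \<le> length D" and "\<And>t h. t < j \<Longrightarrow> h \<in> {1..H} \<Longrightarrow> 0 < sample_lik H Q sel \<theta> D t h"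
  shows "loglik H Q sel (take j D) \<theta> = ereal (sample_loglik H Q sel \<theta> D j)"
  using assms by (simp add: loglik_take)

lemma loglik_take_finite_imp_pos:
  assumes "j \<le> length D" and "loglik H Q sel (take j D) \<theta> \<noteq> -\<infinity>" and "t < j" and "h \<in> {1..H}"
  shows "0 < sample_lik H Q sel \<theta> D t h"
  using assms by (auto simp: loglik_take split: if_splits)

lemma OMLE_B_subset: "OMLE_B \<Theta>h \<beta> H Q sel D \<subseteq> \<Theta>h"
proof -
  have "Bset \<Theta>h \<beta> H Q sel D j \<subseteq> \<Theta>h" for j
    by (induction j) auto
  then show ?thesis
    unfolding OMLE_B_def by blast
qed

lemma loglik_ge_of_mem_OMLE_B:
  assumes "\<theta> \<in> OMLE_B \<Theta>h \<beta> H Q sel (take j D)" and "j \<le> length D" and "0 \<le> \<beta>"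
  shows "(SUP \<theta>'\<in>\<Theta>h. loglik H Q sel (take j D) \<theta>') - \<beta> \<le> loglik H Q sel (take j D) \<theta>"
proof (cases j)
  case 0
  then have "\<Theta>h \<noteq> {}"
    using assms(1) OMLE_B_subset by blast
  then show ?thesis
    using 0 assms(3) by (simp add: loglik_def ereal_minus_le_iff)
next
  case (Suc j')
  then show ?thesis
    using assms(1,2) by (simp add: OMLE_B_def min_absorb1)
qed

section \<open>Models close to the true one\<close>

lemma eps0_nonneg:
  fixes \<theta>s :: "('o::finite,'a::finite) model"
  assumes "\<alpha> > 1"
  shows "0 \<le> eps0 \<alpha> H \<theta>s \<Theta>h"
proof -
  have "0 \<le> D_R \<alpha> (traj \<theta>s \<pi> H) (traj \<theta>0 \<pi> H)" for \<theta>0 \<pi>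
    by (rule D_R_nonneg[OF assms finite_set_pmf_traj])
  then show ?thesis
    unfolding eps0_def by (auto intro: INF_greatest SUP_upper2)
qed

lemma near_model_of_eps0_less:
  assumes "eps0 \<alpha> H \<theta>s \<Theta>h < ereal \<gamma>"
  obtains \<theta>b where "\<theta>b \<in> \<Theta>h" and "\<And>\<pi>. D_R \<alpha> (traj \<theta>s \<pi> H) (traj \<theta>b \<pi> H) \<le> ereal \<gamma>"
proof -
  obtain \<theta>b where "\<theta>b \<in> \<Theta>h" and less: "(SUP \<pi>. D_R \<alpha> (traj \<theta>s \<pi> H) (traj \<theta>b \<pi> H)) < ereal \<gamma>"
    using assms unfolding eps0_def by (auto simp: INF_less_iff)
  moreover have "D_R \<alpha> (traj \<theta>s \<pi> H) (traj \<theta>b \<pi> H) \<le> ereal \<gamma>" for \<pi>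
    using order.strict_trans1[OF SUP_upper[OF UNIV_I] less] by (rule less_imp_le)
  ultimately show ?thesis
    using that by blast
qed

lemma loglik_ge_of_renyi_prod_less:
  fixes \<theta>s \<theta>b :: "('o::finite,'a::finite) model"
  assumes "\<alpha> > 1" and "0 < c" and "j \<le> length D"
    and supp: "\<And>t h. t < j \<Longrightarrow> h \<in> {1..H} \<Longrightarrow> (D ! t) h \<in> set_pmf (traj \<theta>s (nu Q h (sel (take t D))) H)"
    and D_R: "\<And>\<pi>. D_R \<alpha> (traj \<theta>s \<pi> H) (traj \<theta>b \<pi> H) \<le> ereal \<epsilon>"
    and prod: "sample_prod H (\<lambda>D' h. renyi_factor \<alpha> \<epsilon> (traj \<theta>s (nu Q h (sel D')) H) (traj \<theta>b (nu Q h (sel D')) H)) j D < c"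
  shows "ereal (sample_loglik H Q sel \<theta>s D j - (\<epsilon> * (real j * real H) + ln c / (\<alpha> - 1)))
    \<le> loglik H Q sel (take j D) \<theta>b"
proof -
  let ?Ps = "sample_lik H Q sel \<theta>s D" and ?Pb = "sample_lik H Q sel \<theta>b D"
  let ?F = "\<lambda>D' h. renyi_factor \<alpha> \<epsilon> (traj \<theta>s (nu Q h (sel D')) H) (traj \<theta>b (nu Q h (sel D')) H)"
  have Ps: "0 < ?Ps t h" and Pb: "0 < ?Pb t h" if "t < j" "h \<in> {1..H}" for t h
    using supp[OF that] pmf_pos_of_D_R_le[OF D_R supp[OF that]]
    by (simp_all add: sample_lik_def set_pmf_eq')
  have F: "?F (take t D) h ((D ! t) h) = (?Ps t h / ?Pb t h) powr (\<alpha> - 1) * exp (- (\<alpha> - 1) * \<epsilon>)" for t h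
    by (simp add: renyi_factor_def sample_lik_def)
  have F_pos: "0 < ?F (take t D) h ((D ! t) h)" if "t < j" "h \<in> {1..H}" for t h
    using Ps[OF that] Pb[OF that] by (simp add: F)
  have ln_F: "ln (?F (take t D) h ((D ! t) h)) = (\<alpha> - 1) * (ln (?Ps t h) - ln (?Pb t h)) - (\<alpha> - 1) * \<epsilon>"
    if "t < j" "h \<in> {1..H}" for t h
    using Ps[OF that] Pb[OF that] by (simp add: F ln_mult ln_div algebra_simps)
  have "(\<alpha> - 1) * (sample_loglik H Q sel \<theta>s D j - sample_loglik H Q sel \<theta>b D j - \<epsilon> * (real j * real H))
      = (\<alpha> - 1) * (\<Sum>t<j. \<Sum>h\<in>{1..H}. ln (?Ps t h) - ln (?Pb t h) - \<epsilon>)"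
    by (simp add: sample_loglik_def sum_subtractf)
  also have "\<dots> = (\<Sum>t<j. \<Sum>h\<in>{1..H}. (\<alpha> - 1) * (ln (?Ps t h) - ln (?Pb t h)) - (\<alpha> - 1) * \<epsilon>)"
    by (simp add: sum_distrib_left right_diff_distrib)
  also have "\<dots> = (\<Sum>t<j. \<Sum>h\<in>{1..H}. ln (?F (take t D) h ((D ! t) h)))"
    using ln_F by (intro sum.cong refl) simp_all
  also have "\<dots> = ln (sample_prod H ?F j D)"
    by (rule ln_sample_prod[of j H ?F D, symmetric]) (rule F_pos)
  also have "\<dots> < ln c"
    using prod sample_prod_pos[of j H ?F D, OF F_pos] assms(2) by simp
  finally have "sample_loglik H Q sel \<theta>s D j - (\<epsilon> * (real j * real H) + ln c / (\<alpha> - 1)) \<le> sample_loglik H Q sel \<theta>b D j"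
    using assms(1) by (simp add: field_simps)
  then show ?thesis
    using loglik_take_eq_ereal[OF assms(3), of H Q sel \<theta>b, OF Pb] by simp
qed

lemma near_model_dominates_samples:
  fixes \<theta>s :: "('o::finite,'a::finite) model"
  assumes "eps0 \<alpha> H \<theta>s \<Theta>h = 0" and "\<alpha> > 1" and "0 < c" and "c < 1"
    and supp: "\<And>t h. t < j \<Longrightarrow> h \<in> {1..H} \<Longrightarrow> (D ! t) h \<in> set_pmf (traj \<theta>s (nu Q h (sel (take t D))) H)"
  obtains \<theta>b where "\<theta>b \<in> \<Theta>h"
    and "\<And>t h. t < j \<Longrightarrow> h \<in> {1..H} \<Longrightarrow> c * sample_lik H Q sel \<theta>s D t h \<le> sample_lik H Q sel \<theta>b D t h"
proof -
  let ?Ps = "sample_lik H Q sel \<theta>s D"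
  \<comment> \<open>\<open>insert 1\<close> keeps the minimum defined when there are no samples\<close>
  define pmin where "pmin = Min (insert 1 ((\<lambda>(t, h). ?Ps t h) ` ({..<j} \<times> {1..H})))"
  have Ps: "0 < ?Ps t h" if "t < j" "h \<in> {1..H}" for t h
    using supp[OF that] by (simp add: sample_lik_def set_pmf_eq')
  have pmin: "0 < pmin" "\<And>t h. t < j \<Longrightarrow> h \<in> {1..H} \<Longrightarrow> pmin \<le> ?Ps t h"
    using Ps unfolding pmin_def by (auto intro!: Min_le simp: image_iff)
  have \<kappa>: "0 < c - 1 - ln c"
    using ln_less_minus_one[of c] assms(3,4) by simp
  have "eps0 \<alpha> H \<theta>s \<Theta>h < ereal ((c - 1 - ln c) * pmin / 2)"
    using \<kappa> pmin(1) assms(1) by simp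
  then obtain \<theta>b where "\<theta>b \<in> \<Theta>h"
    and D_R: "\<And>\<pi>. D_R \<alpha> (traj \<theta>s \<pi> H) (traj \<theta>b \<pi> H) \<le> ereal ((c - 1 - ln c) * pmin / 2)"
    by (rule near_model_of_eps0_less) blast
  moreover have "c * ?Ps t h \<le> sample_lik H Q sel \<theta>b D t h" if "t < j" "h \<in> {1..H}" for t h
  proof -
    have "(c - 1 - ln c) * pmin / 2 < ?Ps t h * (c - 1 - ln c)"
      using \<kappa> pmin(1) pmin(2)[OF that] by (simp add: mult.commute mult_left_mono)
    then show ?thesis
      unfolding sample_lik_def
      by (intro pmf_ge_of_D_R_less[OF assms(2) finite_set_pmf_traj D_R supp[OF that] assms(3,4)])
        (simp add: sample_lik_def)
  qed
  ultimately show ?thesis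
    using that by blast
qed

lemma loglik_take_ge_of_sample_lik_ge:
  assumes "j \<le> length D" and "0 < c"
    and "\<And>t h. t < j \<Longrightarrow> h \<in> {1..H} \<Longrightarrow> 0 < sample_lik H Q sel \<theta>s D t h"
    and "\<And>t h. t < j \<Longrightarrow> h \<in> {1..H} \<Longrightarrow> c * sample_lik H Q sel \<theta>s D t h \<le> sample_lik H Q sel \<theta> D t h"
  shows "ereal (sample_loglik H Q sel \<theta>s D j + real j * real H * ln c) \<le> loglik H Q sel (take j D) \<theta>"
proof -
  have pos: "0 < sample_lik H Q sel \<theta> D t h" if "t < j" "h \<in> {1..H}" for t h
    using assms(2) assms(3,4)[OF that] by (meson mult_pos_pos order.strict_trans2)
  have "sample_loglik H Q sel \<theta>s D j + real j * real H * ln c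
      = (\<Sum>t<j. \<Sum>h\<in>{1..H}. ln (sample_lik H Q sel \<theta>s D t h) + ln c)"
    by (simp add: sample_loglik_def sum.distrib)
  also have "\<dots> = (\<Sum>t<j. \<Sum>h\<in>{1..H}. ln (c * sample_lik H Q sel \<theta>s D t h))"
  proof (intro sum.cong refl)
    fix t h assume "t \<in> {..<j}" "h \<in> {1..H}"
    then show "ln (sample_lik H Q sel \<theta>s D t h) + ln c = ln (c * sample_lik H Q sel \<theta>s D t h)"
      using assms(2) assms(3)[of t h] by (simp add: ln_mult)
  qed
  also have "\<dots> \<le> sample_loglik H Q sel \<theta> D j"
    unfolding sample_loglik_def using assms(2-4) by (intro sum_mono ln_mono) auto
  finally show ?thesis
    using loglik_take_eq_ereal[OF assms(1) pos] by simp
qed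

lemma sup_loglik_ge_of_eps0_eq_0:
  fixes \<theta>s :: "('o::finite,'a::finite) model"
  assumes "eps0 \<alpha> H \<theta>s \<Theta>h = 0" and "\<alpha> > 1" and "j \<le> length D"
    and supp: "\<And>t h. t < j \<Longrightarrow> h \<in> {1..H} \<Longrightarrow> (D ! t) h \<in> set_pmf (traj \<theta>s (nu Q h (sel (take t D))) H)"
  shows "ereal (sample_loglik H Q sel \<theta>s D j) \<le> (SUP \<theta>\<in>\<Theta>h. loglik H Q sel (take j D) \<theta>)"
proof (rule ereal_le_epsilon2)
  fix \<epsilon> :: real
  assume "0 < \<epsilon>"
  define c where "c = exp (- \<epsilon> / (real j * real H + 1))"
  have "0 < real j * real H + 1"
    by (simp add: add_nonneg_pos)
  then have "0 < c" "c < 1" and ln_c: "- \<epsilon> \<le> real j * real H * ln c"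
    using \<open>0 < \<epsilon>\<close> by (simp_all add: c_def field_simps)
  obtain \<theta>b where "\<theta>b \<in> \<Theta>h"
    and "\<And>t h. t < j \<Longrightarrow> h \<in> {1..H} \<Longrightarrow> c * sample_lik H Q sel \<theta>s D t h \<le> sample_lik H Q sel \<theta>b D t h"
    using near_model_dominates_samples[OF assms(1,2) \<open>0 < c\<close> \<open>c < 1\<close> supp] by blast
  then have "ereal (sample_loglik H Q sel \<theta>s D j + real j * real H * ln c) \<le> loglik H Q sel (take j D) \<theta>b"
    using supp by (intro loglik_take_ge_of_sample_lik_ge[OF assms(3) \<open>0 < c\<close>]) (auto simp: sample_lik_def set_pmf_eq')
  also have "\<dots> \<le> (SUP \<theta>\<in>\<Theta>h. loglik H Q sel (take j D) \<theta>)"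
    by (rule SUP_upper) fact
  finally show "ereal (sample_loglik H Q sel \<theta>s D j) \<le> (SUP \<theta>\<in>\<Theta>h. loglik H Q sel (take j D) \<theta>) + ereal \<epsilon>"
    using ln_c by (cases "SUP \<theta>\<in>\<Theta>h. loglik H Q sel (take j D) \<theta>") auto
qed

text \<open>For \<open>eps0 > 0\<close> the exceptional event is that the likelihood ratio against a model \<open>2 eps0\<close>-close
  to \<open>\<theta>s\<close> exceeds \<open>4 K / \<delta>\<close> at some iteration.\<close>

lemma likelihood_slack:
  fixes \<theta>s :: "('o::finite,'a::finite) model"
  assumes "\<alpha> > 1" and "0 < \<delta>" and "eps0 \<alpha> H \<theta>s \<Theta>h = ereal e"
  obtains U where "measure_pmf.prob (data_pmf \<theta>s Q H sel K) U \<le> (if e = 0 then 0 else \<delta> / 4)"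
    and "\<And>D j. D \<in> set_pmf (data_pmf \<theta>s Q H sel K) \<Longrightarrow> D \<notin> U \<Longrightarrow> j < K \<Longrightarrow>
      ereal (sample_loglik H Q sel \<theta>s D j - (if e = 0 then 0 else 2 * e * (real K * real H) + ln (4 * real K / \<delta>) / (\<alpha> - 1)))
        \<le> (SUP \<theta>\<in>\<Theta>h. loglik H Q sel (take j D) \<theta>)"
proof (cases "e = 0")
  case True
  have "ereal (sample_loglik H Q sel \<theta>s D j) \<le> (SUP \<theta>\<in>\<Theta>h. loglik H Q sel (take j D) \<theta>)"
    if "D \<in> set_pmf (data_pmf \<theta>s Q H sel K)" "j < K" for D j
    using set_pmf_data_pmf[OF that(1)] that(2) True assms(3)
    by (intro sup_loglik_ge_of_eps0_eq_0[OF _ assms(1)]) auto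
  then show ?thesis
    using that[of "{}"] True by simp
next
  case False
  then have "0 < e"
    using eps0_nonneg[OF assms(1), of H \<theta>s \<Theta>h] assms(3) by simp
  then have "eps0 \<alpha> H \<theta>s \<Theta>h < ereal (2 * e)"
    using assms(3) by simp
  then obtain \<theta>b where "\<theta>b \<in> \<Theta>h" and D_R: "\<And>\<pi>. D_R \<alpha> (traj \<theta>s \<pi> H) (traj \<theta>b \<pi> H) \<le> ereal (2 * e)"
    by (rule near_model_of_eps0_less) blast
  let ?F = "\<lambda>D' h. renyi_factor \<alpha> (2 * e) (traj \<theta>s (nu Q h (sel D')) H) (traj \<theta>b (nu Q h (sel D')) H)"
  let ?c = "4 * real K / \<delta>"
  define U where "U = (\<Union>j<K. {D. ?c \<le> sample_prod H ?F j D})"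
  have "measure_pmf.prob (data_pmf \<theta>s Q H sel K) U \<le> (if e = 0 then 0 else \<delta> / 4)"
    unfolding U_def using False prob_UN_sample_prod_ge[of ?c ?F H \<theta>s Q sel K] assms(2)
      nn_integral_renyi_factor_le_1[OF assms(1) finite_set_pmf_traj D_R]
    by (cases "K = 0") (simp_all add: renyi_factor_nonneg)
  moreover have "ereal (sample_loglik H Q sel \<theta>s D j - (if e = 0 then 0 else 2 * e * (real K * real H) + ln ?c / (\<alpha> - 1)))
      \<le> (SUP \<theta>\<in>\<Theta>h. loglik H Q sel (take j D) \<theta>)"
    if D: "D \<in> set_pmf (data_pmf \<theta>s Q H sel K)" "D \<notin> U" and "j < K" for D j
  proof -
    have "ereal (sample_loglik H Q sel \<theta>s D j - (2 * e * (real K * real H) + ln ?c / (\<alpha> - 1)))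
        \<le> ereal (sample_loglik H Q sel \<theta>s D j - (2 * e * (real j * real H) + ln ?c / (\<alpha> - 1)))"
      using \<open>0 < e\<close> \<open>j < K\<close> by (simp add: mult_left_mono mult_right_mono)
    also have "\<dots> \<le> loglik H Q sel (take j D) \<theta>b"
    proof (rule loglik_ge_of_renyi_prod_less[OF assms(1) _ _ _ D_R])
      show "sample_prod H ?F j D < ?c"
        using D(2) \<open>j < K\<close> by (auto simp: U_def not_le)
    qed (use set_pmf_data_pmf[OF D(1)] \<open>j < K\<close> \<open>0 < e\<close> assms(2) in auto)
    also have "\<dots> \<le> (SUP \<theta>\<in>\<Theta>h. loglik H Q sel (take j D) \<theta>)"
      by (rule SUP_upper) fact
    finally show ?thesis
      using False by simp
  qed
  ultimately show ?thesis
    by (rule that)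
qed

section \<open>The Hellinger bound on the good event\<close>

text \<open>Taking logarithms, the two hypotheses on \<open>Pt \<le> u\<close> give \<open>\<Sum> - ln \<rho> < ln c + r / 2\<close>; then use
  \<open>1 - \<rho> \<le> - ln \<rho>\<close>.\<close>

lemma sum_le_of_affinity_prod_less:
  fixes d Pt Ps u \<rho> :: "'i \<Rightarrow> real"
  assumes "finite I"
    and pos: "\<And>i. i \<in> I \<Longrightarrow> 0 < Pt i \<and> 0 < Ps i \<and> Pt i \<le> u i \<and> 0 < \<rho> i"
    and lik: "(\<Sum>i\<in>I. ln (Ps i)) - r \<le> (\<Sum>i\<in>I. ln (Pt i))"
    and prod: "(\<Prod>i\<in>I. sqrt (u i / Ps i) / \<rho> i) < c"
    and d: "\<And>i. i \<in> I \<Longrightarrow> d i \<le> 4/3 * (1 - \<rho> i) + 8/3 * \<eta>"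
  shows "(\<Sum>i\<in>I. d i) \<le> 4/3 * (ln c + r / 2) + 8/3 * \<eta> * card I"
proof -
  have factor_pos: "0 < sqrt (u i / Ps i) / \<rho> i" if "i \<in> I" for i
    using pos[OF that] by simp
  have "- r / 2 - (\<Sum>i\<in>I. ln (\<rho> i)) \<le> (\<Sum>i\<in>I. (ln (Pt i) - ln (Ps i)) / 2 - ln (\<rho> i))"
    using lik by (simp add: sum_subtractf sum_divide_distrib[symmetric])
  also have "\<dots> \<le> (\<Sum>i\<in>I. ln (sqrt (u i / Ps i) / \<rho> i))"
  proof (intro sum_mono)
    fix i assume "i \<in> I"
    with pos have "0 < u i"
      by fastforce
    with pos[OF \<open>i \<in> I\<close>] have "ln (Pt i) \<le> ln (u i)"
      by simp
    with pos[OF \<open>i \<in> I\<close>] \<open>0 < u i\<close> show "(ln (Pt i) - ln (Ps i)) / 2 - ln (\<rho> i) \<le> ln (sqrt (u i / Ps i) / \<rho> i)"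
      by (simp add: ln_div ln_sqrt)
  qed
  also have "\<dots> = ln (\<Prod>i\<in>I. sqrt (u i / Ps i) / \<rho> i)"
    using factor_pos by (subst ln_prod[OF \<open>finite I\<close>]) force+
  also have "\<dots> < ln c"
  proof -
    have "0 < (\<Prod>i\<in>I. sqrt (u i / Ps i) / \<rho> i)"
      by (rule prod_pos) (rule factor_pos)
    then show ?thesis
      using prod by simp
  qed
  finally have neg_ln: "(\<Sum>i\<in>I. - ln (\<rho> i)) < ln c + r / 2"
    by (simp add: sum_negf)
  have "(\<Sum>i\<in>I. d i) \<le> (\<Sum>i\<in>I. 4/3 * (- ln (\<rho> i)) + 8/3 * \<eta>)"
  proof (intro sum_mono)
    fix i assume "i \<in> I"
    then have "1 - \<rho> i \<le> - ln (\<rho> i)"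
      using pos ln_le_minus_one[of "\<rho> i"] by force
    then show "d i \<le> 4/3 * (- ln (\<rho> i)) + 8/3 * \<eta>"
      using d[OF \<open>i \<in> I\<close>] by argo
  qed
  also have "\<dots> = 4/3 * (\<Sum>i\<in>I. - ln (\<rho> i)) + 8/3 * \<eta> * card I"
    by (simp only: sum.distrib sum_distrib_left) simp
  finally show ?thesis
    using neg_ln by argo
qed

lemma sum_D_H2_le_of_bracket_prod_less:
  fixes \<theta> \<theta>s :: "('o::finite,'a::finite) model"
  assumes bracket: "is_bracket H \<eta> l g"
    and cover: "in_bracket H l g \<theta>"
    and "j \<le> length D"
    and supp: "\<And>t h. t < j \<Longrightarrow> h \<in> {1..H} \<Longrightarrow> (D ! t) h \<in> set_pmf (traj \<theta>s (nu Q h (sel (take t D))) H)"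
    and prod: "sample_prod H (\<lambda>D' h. bracket_factor H \<theta>s (nu Q h (sel D')) g) j D < c"
    and lik: "ereal (sample_loglik H Q sel \<theta>s D j - r) \<le> loglik H Q sel (take j D) \<theta>"
  shows "(\<Sum>t<j. \<Sum>h\<in>{1..H}. D_H2 (traj \<theta> (nu Q h (sel (take t D))) H) (traj \<theta>s (nu Q h (sel (take t D))) H))
    \<le> 4/3 * (ln c + r / 2) + 8/3 * \<eta> * (real j * real H)"
proof -
  let ?I = "{..<j} \<times> {1..H}"
  define \<pi> where "\<pi> = (\<lambda>(t, h). nu Q h (sel (take t D)))"
  define x where "x = (\<lambda>(t, h). (D ! t) h)"
  define Pt where "Pt = (\<lambda>i. pmf (traj \<theta> (\<pi> i) H) (x i))"
  define Ps where "Ps = (\<lambda>i. pmf (traj \<theta>s (\<pi> i) H) (x i))"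
  define u where "u = (\<lambda>i. max (g (x i)) 0 * pol_prob (\<pi> i) (x i))"
  define \<rho> where "\<rho> = (\<lambda>i. bracket_affinity H \<theta>s (\<pi> i) g)"
  have x: "x i \<in> set_pmf (traj \<theta>s (\<pi> i) H)" if "i \<in> ?I" for i
    using that supp unfolding x_def \<pi>_def by auto
  have len: "length (x i) = H" if "i \<in> ?I" for i
    using x[OF that] set_pmf_traj by blast
  have "loglik H Q sel (take j D) \<theta> \<noteq> -\<infinity>"
    using lik by auto
  then have Pt_pos: "0 < Pt i" if "i \<in> ?I" for i
    using that loglik_take_finite_imp_pos[OF \<open>j \<le> length D\<close>]
    unfolding Pt_def \<pi>_def x_def by (auto simp: sample_lik_def)
  have pos: "0 < Pt i \<and> 0 < Ps i \<and> Pt i \<le> u i \<and> 0 < \<rho> i" if i: "i \<in> ?I" for i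
  proof -
    have "0 < Ps i"
      using x[OF i] by (simp add: Ps_def set_pmf_eq')
    moreover have "Pt i \<le> u i"
      unfolding Pt_def u_def by (rule pmf_traj_le_upper_bracket[OF cover len[OF i]])
    moreover have "0 < \<rho> i"
      unfolding \<rho>_def using Pt_pos[OF i] \<open>0 < Ps i\<close> \<open>Pt i \<le> u i\<close>
      by (intro bracket_affinity_pos[OF len[OF i]]) (auto simp: u_def Ps_def)
    ultimately show ?thesis
      using Pt_pos[OF i] by simp
  qed
  have "(\<Sum>t<j. \<Sum>h\<in>{1..H}. D_H2 (traj \<theta> (nu Q h (sel (take t D))) H) (traj \<theta>s (nu Q h (sel (take t D))) H))
      = (\<Sum>i\<in>?I. D_H2 (traj \<theta> (\<pi> i) H) (traj \<theta>s (\<pi> i) H))"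
    unfolding \<pi>_def by (simp add: sum.cartesian_product split_def)
  also have "\<dots> \<le> 4/3 * (ln c + r / 2) + 8/3 * \<eta> * card ?I"
  proof (rule sum_le_of_affinity_prod_less[OF _ pos])
    show "(\<Sum>i\<in>?I. ln (Ps i)) - r \<le> (\<Sum>i\<in>?I. ln (Pt i))"
      using lik Pt_pos
      by (simp add: loglik_take \<open>j \<le> length D\<close> sample_loglik_def sample_lik_def Pt_def Ps_def \<pi>_def x_def
          sum.cartesian_product split_def split: if_splits)
    show "(\<Prod>i\<in>?I. sqrt (u i / Ps i) / \<rho> i) < c"
      using prod
      by (simp add: sample_prod_def prod.cartesian_product bracket_factor_def u_def \<rho>_def Ps_def x_def
          \<pi>_def sample_lik_def split_def)
    show "D_H2 (traj \<theta> (\<pi> i) H) (traj \<theta>s (\<pi> i) H) \<le> 4/3 * (1 - \<rho> i) + 8/3 * \<eta>" for i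
      unfolding \<rho>_def by (rule D_H2_traj_le_bracket_affinity[OF bracket cover])
  qed simp_all
  finally show ?thesis
    by (simp add: card_cartesian_product)
qed

lemma sum_D_H2_le_of_good_sample:
  fixes \<theta>s :: "('o::finite,'a::finite) model"
  assumes brackets: "\<forall>i<m. is_bracket H \<eta> (l i) (g i)"
    and cover: "\<forall>\<theta>\<in>\<Theta>h. \<exists>i<m. in_bracket H (l i) (g i) \<theta>"
    and D: "D \<in> set_pmf (data_pmf \<theta>s Q H sel K)" and "j \<le> K"
    and \<theta>0: "\<theta>0 \<in> OMLE_B \<Theta>h (ereal b) H Q sel (take j D)" and "0 \<le> b"
    and prod: "\<forall>i<m. sample_prod H (\<lambda>D' h. bracket_factor H \<theta>s (nu Q h (sel D')) (g i)) j D < c"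
    and slack: "ereal (sample_loglik H Q sel \<theta>s D j - r) \<le> (SUP \<theta>\<in>\<Theta>h. loglik H Q sel (take j D) \<theta>)"
  shows "(\<Sum>t<j. \<Sum>h\<in>{1..H}. D_H2 (traj \<theta>0 (nu Q h (sel (take t D))) H) (traj \<theta>s (nu Q h (sel (take t D))) H))
    \<le> 4/3 * (ln c + (r + b) / 2) + 8/3 * \<eta> * (real j * real H)"
proof -
  have len: "j \<le> length D"
    using set_pmf_data_pmf[OF D] \<open>j \<le> K\<close> by simp
  obtain i where "i < m" and cover_\<theta>0: "in_bracket H (l i) (g i) \<theta>0"
    using cover \<theta>0 OMLE_B_subset by blast
  have "ereal (sample_loglik H Q sel \<theta>s D j - (r + b)) = ereal (sample_loglik H Q sel \<theta>s D j - r) - ereal b"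
    by simp
  also have "\<dots> \<le> (SUP \<theta>\<in>\<Theta>h. loglik H Q sel (take j D) \<theta>) - ereal b"
    using slack by (rule ereal_minus_mono) simp
  also have "\<dots> \<le> loglik H Q sel (take j D) \<theta>0"
    using loglik_ge_of_mem_OMLE_B[OF \<theta>0 len] \<open>0 \<le> b\<close> by simp
  finally show ?thesis
    using brackets prod set_pmf_data_pmf[OF D] \<open>i < m\<close> \<open>j \<le> K\<close>
    by (intro sum_D_H2_le_of_bracket_prod_less[OF _ cover_\<theta>0 len]) auto
qed

section \<open>The confidence radius\<close>

lemma beta0_eq_ereal:
  fixes \<theta>s :: "('o::finite,'a::finite) model"
  assumes "\<alpha> > 1" and "K \<ge> 1" and "H \<ge> 1" and "beta0 \<alpha> \<delta> \<eta> K H \<theta>s \<Theta>h \<noteq> \<infinity>"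
  obtains e n0 where "eps0 \<alpha> H \<theta>s \<Theta>h = ereal e" and "0 \<le> e" and "bracket_num H \<eta> \<Theta>h = enat n0"
    and "beta0 \<alpha> \<delta> \<eta> K H \<theta>s \<Theta>h = ereal (ln n0 + ln (4 * exp 1 * real K / \<delta>) + e * (real K * real H)
           + (if e \<noteq> 0 then ln (4 * real K / \<delta>) / (\<alpha> - 1) else 0))"
proof -
  have KH: "0 < real K * real H"
    using assms(2,3) by simp
  obtain e where e: "eps0 \<alpha> H \<theta>s \<Theta>h = ereal e"
    using eps0_nonneg[OF assms(1), of H \<theta>s \<Theta>h] assms(2-4) KH
    by (cases "eps0 \<alpha> H \<theta>s \<Theta>h"; cases "bracket_num H \<eta> \<Theta>h") (auto simp: beta0_def ln_enat_def)
  moreover obtain n0 where "bracket_num H \<eta> \<Theta>h = enat n0"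
    using assms(4) e by (cases "bracket_num H \<eta> \<Theta>h") (auto simp: beta0_def ln_enat_def)
  moreover have "0 \<le> e"
    using eps0_nonneg[OF assms(1), of H \<theta>s \<Theta>h] e by simp
  ultimately show ?thesis
    using that by (simp add: beta0_def ln_enat_def)
qed

lemma bracket_cover_of_bracket_num:
  assumes "bracket_num H \<eta> \<Theta>h = enat n0" and "\<Theta>h \<noteq> {}"
  obtains m l g where "1 \<le> m" and "m \<le> n0" and "\<forall>i<m. is_bracket H \<eta> (l i) (g i)"
    and "\<forall>\<theta>\<in>\<Theta>h. \<exists>i<m. in_bracket H (l i) (g i) \<theta>"
proof -
  have "bracket_num H \<eta> \<Theta>h < enat (Suc n0)"
    using assms(1) by simp
  then obtain m l g where "m \<le> n0" and brackets: "\<forall>i<m. is_bracket H \<eta> (l i) (g i)"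
    and cover: "\<forall>\<theta>\<in>\<Theta>h. \<exists>i<m. in_bracket H (l i) (g i) \<theta>"
    unfolding bracket_num_def in_bracket_def by (auto simp: INF_less_iff less_Suc_eq_le)
  moreover have "1 \<le> m"
    using cover assms(2) by fastforce
  ultimately show ?thesis
    using that by blast
qed

lemma confidence_radius_nonneg:
  fixes e \<delta> \<alpha> :: real and n0 K H :: nat
  assumes "1 \<le> n0" and "1 \<le> K" and "0 < \<delta>" and "\<delta> < 1" and "\<alpha> > 1" and "0 \<le> e"
  shows "0 \<le> ln n0 + ln (4 * exp 1 * real K / \<delta>) + e * (real K * real H)
      + (if e \<noteq> 0 then ln (4 * real K / \<delta>) / (\<alpha> - 1) else 0)"
proof -
  have "1 \<le> exp 1 * real K"
    using mult_mono[of 1 "exp 1" 1 "real K"] assms(2) by simp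
  then have "0 \<le> ln (4 * exp 1 * real K / \<delta>)" and "0 \<le> ln (4 * real K / \<delta>) / (\<alpha> - 1)"
    using assms(2-5) by (auto intro!: divide_nonneg_pos simp: field_simps)
  then show ?thesis
    using assms(1,6) by simp
qed

lemma confidence_radius_arith:
  fixes e \<delta> \<eta> \<alpha> b r c :: real and m n0 K H j :: nat
  assumes "1 \<le> m" and "m \<le> n0" and "j < K" and "1 \<le> H" and "0 < \<delta>" and "\<delta> < 1"
    and "\<eta> \<le> 1 / (real K * real H)" and "\<alpha> > 1" and "0 \<le> e"
    and b: "b = ln n0 + ln (4 * exp 1 * real K / \<delta>) + e * (real K * real H)
      + (if e \<noteq> 0 then ln (4 * real K / \<delta>) / (\<alpha> - 1) else 0)"
    and r: "r = (if e = 0 then 0 else 2 * e * (real K * real H) + ln (4 * real K / \<delta>) / (\<alpha> - 1))"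
    and c: "c = m * K / (if e = 0 then \<delta> else 3 * \<delta> / 4)"
  shows "4/3 * (ln c + (r + b) / 2) + 8/3 * \<eta> * (real j * real H) \<le> 2 * b"
proof -
  have "\<eta> * (real j * real H) \<le> 1 / (real K * real H) * (real j * real H)"
    using assms(7) by (intro mult_right_mono) auto
  also have "\<dots> \<le> 1"
    using assms(3,4) by (simp add: field_simps)
  finally have \<eta>: "8/3 * \<eta> * (real j * real H) \<le> 8/3"
    by (simp add: mult.commute)
  have ln3: "1 \<le> ln (3::real)" and ln4: "1 \<le> ln (4::real)"
    using exp_le by (subst ln_ge_iff; simp)+
  have ln_m: "ln m \<le> ln n0"
    using assms(1,2) by simp
  define L where "L = ln (real K) - ln \<delta>"
  have ln_K: "ln (4 * exp 1 * real K / \<delta>) = ln 4 + 1 + L"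
    unfolding L_def using assms(3,5) by (simp add: ln_div ln_mult)
  define R where "R = ln (4 * real K / \<delta>) / (\<alpha> - 1)"
  have "0 \<le> R"
    unfolding R_def using assms(3,5,6,8) by (intro divide_nonneg_pos) (auto simp: field_simps)
  show ?thesis
  proof (cases "e = 0")
    case True
    have "ln c = ln m + L"
      unfolding c L_def using True assms(1,3,5) by (simp add: ln_div ln_mult)
    moreover have "r = 0" and "b = ln n0 + ln 4 + 1 + L"
      using True b r ln_K by simp_all
    ultimately show ?thesis
      using ln_m ln4 \<eta> by argo
  next
    case False
    have "ln c = ln 4 + ln m + L - ln 3"
      unfolding c L_def using False assms(1,3,5) by (simp add: ln_div ln_mult)
    moreover have "r = 2 * (e * (real K * real H)) + R" and "b = ln n0 + ln 4 + 1 + L + e * (real K * real H) + R"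
      using False b r ln_K unfolding R_def by simp_all
    ultimately show ?thesis
      using ln_m ln3 \<eta> \<open>0 \<le> R\<close> by argo
  qed
qed

section \<open>Probability of the good event\<close>

lemma prob_UN_bracket_prod_ge:
  fixes \<theta>s :: "('o::finite,'a::finite) model"
  assumes "0 < c"
  shows "measure_pmf.prob (data_pmf \<theta>s Q H sel K)
      (\<Union>i<m. \<Union>j<K. {D. c \<le> sample_prod H (\<lambda>D' h. bracket_factor H \<theta>s (nu Q h (sel D')) (g i)) j D})
    \<le> real m * real K / c"
proof -
  have "measure_pmf.prob (data_pmf \<theta>s Q H sel K)
      (\<Union>i<m. \<Union>j<K. {D. c \<le> sample_prod H (\<lambda>D' h. bracket_factor H \<theta>s (nu Q h (sel D')) (g i)) j D})
    \<le> (\<Sum>i<m. real K / c)"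
    using assms
    by (intro order.trans[OF measure_pmf.finite_measure_subadditive_finite] sum_mono
        prob_UN_sample_prod_ge bracket_factor_nonneg nn_integral_bracket_factor) auto
  then show ?thesis
    by simp
qed

lemma measure_pmf_prob_ge_of_exceptional:
  assumes "set_pmf p - (A \<union> B) \<subseteq> G" and "measure_pmf.prob p A \<le> a" and "measure_pmf.prob p B \<le> b"
  shows "measure_pmf.prob p G \<ge> 1 - (a + b)"
proof -
  have "measure_pmf.prob p (UNIV - G) \<le> measure_pmf.prob p (A \<union> B)"
    using assms(1) by (intro measure_pmf.finite_measure_mono_AE) (auto simp: AE_measure_pmf_iff)
  also have "\<dots> \<le> a + b"
    using measure_Un_le[of A p B] assms(2,3) by simp
  finally show ?thesis
    using measure_pmf.prob_compl[of G p] by simp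
qed

lemma prob_hellinger_confidence_ge:
  fixes \<theta>s :: "('o::finite,'a::finite) model"
  assumes "\<alpha> > 1" and "0 < \<delta>" and "\<delta> < 1" and "K \<ge> 1" and "H \<ge> 1"
    and "\<eta> \<le> 1 / (real K * real H)" and "\<Theta>h \<noteq> {}"
    and e: "eps0 \<alpha> H \<theta>s \<Theta>h = ereal e" "0 \<le> e" and n0: "bracket_num H \<eta> \<Theta>h = enat n0"
    and b: "b = ln n0 + ln (4 * exp 1 * real K / \<delta>) + e * (real K * real H)
      + (if e \<noteq> 0 then ln (4 * real K / \<delta>) / (\<alpha> - 1) else 0)"
  shows "measure_pmf.prob (data_pmf \<theta>s Q H sel K)
           {D. \<forall>k\<in>{1..K}. \<forall>\<theta>0\<in>OMLE_B \<Theta>h (ereal b) H Q sel (take (k - 1) D).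
                 ereal (\<Sum>t<k - 1. \<Sum>h\<in>{1..H}.
                    D_H2 (traj \<theta>0 (nu Q h (sel (take t D))) H) (traj \<theta>s (nu Q h (sel (take t D))) H))
                 \<le> 2 * ereal b}
         \<ge> 1 - \<delta>"
    (is "measure_pmf.prob ?p ?Good \<ge> _")
proof -
  obtain m l g where m: "1 \<le> m" "m \<le> n0" and brackets: "\<forall>i<m. is_bracket H \<eta> (l i) (g i)"
    and cover: "\<forall>\<theta>\<in>\<Theta>h. \<exists>i<m. in_bracket H (l i) (g i) \<theta>"
    using bracket_cover_of_bracket_num[OF n0 \<open>\<Theta>h \<noteq> {}\<close>] by blast
  define r where "r = (if e = 0 then 0 else 2 * e * (real K * real H) + ln (4 * real K / \<delta>) / (\<alpha> - 1))"
  obtain U where U: "measure_pmf.prob ?p U \<le> (if e = 0 then 0 else \<delta> / 4)"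
    and slack: "\<And>D j. D \<in> set_pmf ?p \<Longrightarrow> D \<notin> U \<Longrightarrow> j < K \<Longrightarrow>
      ereal (sample_loglik H Q sel \<theta>s D j - r) \<le> (SUP \<theta>\<in>\<Theta>h. loglik H Q sel (take j D) \<theta>)"
    using likelihood_slack[OF assms(1,2) e(1)] unfolding r_def by blast
  define c where "c = m * K / (if e = 0 then \<delta> else 3 * \<delta> / 4)"
  define Bad where "Bad = (\<Union>i<m. \<Union>j<K. {D. c \<le> sample_prod H (\<lambda>D' h. bracket_factor H \<theta>s (nu Q h (sel D')) (g i)) j D})"
  have "0 < c"
    unfolding c_def using m assms(2,4) by simp
  moreover have "real m * real K / c = (if e = 0 then \<delta> else 3 * \<delta> / 4)"
    unfolding c_def using m assms(2,4) by simp
  ultimately have Bad: "measure_pmf.prob ?p Bad \<le> (if e = 0 then \<delta> else 3 * \<delta> / 4)"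
    using prob_UN_bracket_prod_ge[where c = c and \<theta>s = \<theta>s and Q = Q and H = H and sel = sel and K = K
        and m = m and g = g]
    unfolding Bad_def by simp
  have "0 \<le> b"
    unfolding b using m by (intro confidence_radius_nonneg[OF _ assms(4,2,3,1) e(2)]) simp
  have "set_pmf ?p - (Bad \<union> U) \<subseteq> ?Good"
  proof safe
    fix D k \<theta>0
    assume D: "D \<in> set_pmf ?p" "D \<notin> Bad" "D \<notin> U" and "k \<in> {1..K}"
      and \<theta>0: "\<theta>0 \<in> OMLE_B \<Theta>h (ereal b) H Q sel (take (k - 1) D)"
    then have "k - 1 < K"
      by auto
    have prod: "\<forall>i<m. sample_prod H (\<lambda>D' h. bracket_factor H \<theta>s (nu Q h (sel D')) (g i)) (k - 1) D < c"
      using D(2) \<open>k - 1 < K\<close> by (auto simp: Bad_def not_le)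
    have "(\<Sum>t<k - 1. \<Sum>h\<in>{1..H}. D_H2 (traj \<theta>0 (nu Q h (sel (take t D))) H) (traj \<theta>s (nu Q h (sel (take t D))) H))
        \<le> 4/3 * (ln c + (r + b) / 2) + 8/3 * \<eta> * (real (k - 1) * real H)"
      using \<open>k - 1 < K\<close> prod
      by (intro sum_D_H2_le_of_good_sample[OF brackets cover D(1) _ \<theta>0 \<open>0 \<le> b\<close> _ slack[OF D(1,3)]]) simp_all
    also have "\<dots> \<le> 2 * b"
      by (rule confidence_radius_arith[OF m \<open>k - 1 < K\<close> assms(5,2,3,6,1) e(2) b r_def c_def])
    finally show "ereal (\<Sum>t<k - 1. \<Sum>h\<in>{1..H}.
        D_H2 (traj \<theta>0 (nu Q h (sel (take t D))) H) (traj \<theta>s (nu Q h (sel (take t D))) H)) \<le> 2 * ereal b"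
      by simp
  qed
  then have "measure_pmf.prob ?p ?Good
      \<ge> 1 - ((if e = 0 then \<delta> else 3 * \<delta> / 4) + (if e = 0 then 0 else \<delta> / 4))"
    by (rule measure_pmf_prob_ge_of_exceptional[OF _ Bad U])
  then show ?thesis
    by (simp split: if_splits)
qed

theorem lemma5:
  fixes \<alpha> \<delta> \<eta> :: real and K H :: nat
    and \<theta>s :: "('o::finite, 'a::finite) model" and \<Theta>h :: "('o,'a) model set"
    and Q :: "nat \<Rightarrow> 'a list set"
    and sel :: "('o,'a) data list \<Rightarrow> ('o,'a) policy"
  assumes "\<alpha> > 1" and "0 < \<delta>" and "\<delta> < 1" and "K \<ge> 1" and "H \<ge> 1"
    and "0 < \<eta>" and "\<eta> \<le> 1 / (real K * real H)"
    and "\<forall>h\<in>{1..H}. Q h \<noteq> {} \<and> (\<forall>q\<in>Q h. length q = H - h)"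
    and "\<forall>D. length D < K \<longrightarrow> (\<forall>\<pi>.
           TV_diam H (OMLE_B \<Theta>h (beta0 \<alpha> \<delta> \<eta> K H \<theta>s \<Theta>h) H Q sel D) \<pi>
           \<le> TV_diam H (OMLE_B \<Theta>h (beta0 \<alpha> \<delta> \<eta> K H \<theta>s \<Theta>h) H Q sel D) (sel D))"
  shows "measure_pmf.prob (data_pmf \<theta>s Q H sel K)
           {D. \<forall>k\<in>{1..K}. \<forall>\<theta>0\<in>OMLE_B \<Theta>h (beta0 \<alpha> \<delta> \<eta> K H \<theta>s \<Theta>h) H Q sel (take (k - 1) D).
                 ereal (\<Sum>t<k - 1. \<Sum>h\<in>{1..H}.
                    D_H2 (traj \<theta>0 (nu Q h (sel (take t D))) H) (traj \<theta>s (nu Q h (sel (take t D))) H))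
                 \<le> 2 * beta0 \<alpha> \<delta> \<eta> K H \<theta>s \<Theta>h}
         \<ge> 1 - \<delta>"
proof (cases "\<Theta>h = {} \<or> beta0 \<alpha> \<delta> \<eta> K H \<theta>s \<Theta>h = \<infinity>")
  case True
  then show ?thesis
    using OMLE_B_subset[of \<Theta>h] assms(2) by (auto simp: subset_empty)
next
  case False
  then obtain e n0 where e: "eps0 \<alpha> H \<theta>s \<Theta>h = ereal e" "0 \<le> e" and n0: "bracket_num H \<eta> \<Theta>h = enat n0"
    and \<beta>: "beta0 \<alpha> \<delta> \<eta> K H \<theta>s \<Theta>h = ereal (ln n0 + ln (4 * exp 1 * real K / \<delta>) + e * (real K * real H)
           + (if e \<noteq> 0 then ln (4 * real K / \<delta>) / (\<alpha> - 1) else 0))"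
    using beta0_eq_ereal[OF assms(1,4,5)] by blast
  with False show ?thesis
    unfolding \<beta> by (intro prob_hellinger_confidence_ge[OF assms(1-5,7) _ e n0 refl]) simp
qed

end
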